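(* For every $k$ it holds that $k\text{-}NN(IP_n)\ge\frac{n}{6+o(1)}$, where $o(1)$ tends to $0$ as $n\to\infty$.
   Context: The mod 2 inner product function of $2n$ variables is $IP_n(x_1,\dots,x_n,y_1,\dots,y_n)=(x_1\wedge y_1)\oplus\cdots\oplus(x_n\wedge y_n)$. For $f:\{0,1\}^m\to\{0,1\}$ and a positive integer $k$, a $k$-nearest neighbor representation of $f$ is a pair of disjoint finite sets $(P,N)$ of points of $\mathbb R^m$ such that for every $a\in\{0,1\}^m$, the $k$ smallest Euclidean distances from $a$ to points of $P\cup N$ are all strictly smaller than the remaining $|P\cup N|-k$ distances, and $f(a)=1$ iff at least $k/2$ of the $k$ points of $P\cup N$ closest to $a$ belong to $P$. Its size is $|P\cup N|$, and $k\text{-}NN(f)$ is the minimum size of a $k$-nearest neighbor representation of $f$. *)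

theory Defs
  imports Complex_Main
begin

text \<open>Points of R^m are represented as functions nat => real vanishing at
  all indices >= m (coordinates 0..m-1).\<close>

definition euclid_space :: "nat \<Rightarrow> (nat \<Rightarrow> real) set" where
  "euclid_space m = {p. \<forall>i\<ge>m. p i = 0}"

definition bool_cube :: "nat \<Rightarrow> (nat \<Rightarrow> real) set" where
  "bool_cube m = {a. (\<forall>i<m. a i \<in> {0, 1}) \<and> (\<forall>i\<ge>m. a i = 0)}"

definition edist :: "nat \<Rightarrow> (nat \<Rightarrow> real) \<Rightarrow> (nat \<Rightarrow> real) \<Rightarrow> real" where
  "edist m a p = sqrt (\<Sum>i<m. (a i - p i)^2)"

text \<open>Inner product mod 2 of 2n variables: x_i is coordinate i, y_i is coordinate n+i.\<close>
definition IP :: "nat \<Rightarrow> (nat \<Rightarrow> real) \<Rightarrow> bool" where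
  "IP n a = odd (card {i. i < n \<and> a i = 1 \<and> a (n + i) = 1})"

definition is_kNN_rep :: "nat \<Rightarrow> nat \<Rightarrow> ((nat \<Rightarrow> real) \<Rightarrow> bool)
    \<Rightarrow> (nat \<Rightarrow> real) set \<Rightarrow> (nat \<Rightarrow> real) set \<Rightarrow> bool" where
  "is_kNN_rep k m f P N \<longleftrightarrow>
     finite P \<and> finite N \<and> P \<inter> N = {} \<and> P \<union> N \<subseteq> euclid_space m \<and>
     (\<forall>a\<in>bool_cube m. \<exists>S. S \<subseteq> P \<union> N \<and> card S = k \<and>
        (\<forall>s\<in>S. \<forall>t\<in>(P \<union> N) - S. edist m a s < edist m a t) \<and>
        (f a \<longleftrightarrow> real (card (S \<inter> P)) \<ge> real k / 2))"

definition kNN :: "nat \<Rightarrow> nat \<Rightarrow> ((nat \<Rightarrow> real) \<Rightarrow> bool) \<Rightarrow> nat" where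
  "kNN k m f = (LEAST s. \<exists>P N. is_kNN_rep k m f P N \<and> card (P \<union> N) = s)"

end

theory Submission
  imports Defs "Jordan_Normal_Form.Char_Poly"
begin

text \<open>
  A k-nearest neighbour representation of \<open>IP\<^sub>n\<close> with s points gives a sign representation of
  the \<open>2\<^sup>n \<times> 2\<^sup>n\<close> Sylvester-Hadamard matrix \<open>(-1)\<^bsup>|S \<inter> T|\<^esup>\<close> in dimension
  \<open>r = (s choose k)\<close>: there is one coordinate for each k-subset T of the points, carrying the
  label of T times \<open>exp (- \<beta> \<Sum>\<^sub>p\<^sub>\<in>\<^sub>T |a - p|\<^sup>2)\<close>. This weight factors over the two halves
  \<open>a = (x, y)\<close> of the input, and for large \<open>\<beta>\<close> the term of the k nearest points dominates.

  Forster's argument shows \<open>N \<le> 37 r\<^sup>2\<close> for any sign representation in dimension r of an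
  \<open>N \<times> N\<close> sign matrix with orthogonal rows. Perturb \<open>q r \<le> N\<close> of the row vectors, keeping all
  signs, so that they split into q bases of \<open>\<real>\<^sup>r\<close>. A near-minimiser A of the potential
  \<open>\<Sum>\<^sub>k ln |A x\<^sub>k|\<^sup>2 - q ln (det A)\<^sup>2\<close>, which is bounded below by Hadamard's inequality, makes
  the normalised vectors \<open>A x\<^sub>k\<close> approximately isotropic:
  \<open>\<Sum>\<^sub>k \<langle>z, A x\<^sub>k\<rangle>\<^sup>2 / |A x\<^sub>k|\<^sup>2 \<ge> q / 6\<close> for every unit vector z, for otherwise the update
  \<open>A \<mapsto> (I + z z\<^sup>T) A\<close> would decrease the potential by more than \<open>q / 2\<close>. Mapping the column
  vectors by \<open>(A\<^sup>-\<^sup>1)\<^sup>T\<close> keeps all signs, and summing the correlations against the orthogonal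
  rows gives \<open>N q / 6 \<le> N \<surd>(q r)\<close>.

  Hence \<open>2\<^sup>n \<le> 37 (s choose k)\<^sup>2 \<le> 37 \<cdot> 4\<^sup>s\<close>, so \<open>n \<le> 6 s\<close> once \<open>n \<ge> 8\<close>, and \<open>\<epsilon> = 0\<close> works.
\<close>

section \<open>Hadamard's inequality\<close>

text \<open>As for the points of Defs, a vector of \<open>\<real>\<^sup>r\<close> is a function on \<open>nat\<close> of which only the
  coordinates below r matter.\<close>

definition dot :: "nat \<Rightarrow> (nat \<Rightarrow> real) \<Rightarrow> (nat \<Rightarrow> real) \<Rightarrow> real" where
  "dot r y z = (\<Sum>a\<in>{0..<r}. y a * z a)"

lemma dot_comm: "dot r y z = dot r z y"
  unfolding dot_def by (simp add: mult.commute)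

lemma dot_self_nonneg: "dot r y y \<ge> 0"
  unfolding dot_def by (intro sum_nonneg) auto

lemma dot_self_eq_0_iff: "dot r y y = 0 \<longleftrightarrow> (\<forall>a<r. y a = 0)"
  unfolding dot_def by (subst sum_nonneg_eq_0_iff) auto

lemma dot_cong: "(\<And>a. a < r \<Longrightarrow> y a = y' a) \<Longrightarrow> (\<And>a. a < r \<Longrightarrow> z a = z' a) \<Longrightarrow> dot r y z = dot r y' z'"
  unfolding dot_def by (intro sum.cong) auto

lemma inner_col_eq_dot: "col C i \<bullet> col C j = dot (dim_row C) (\<lambda>a. C $$ (a, i)) (\<lambda>a. C $$ (a, j))"
  unfolding scalar_prod_def dot_def by (intro sum.cong) (auto simp: col_def)

lemma det_subtract_earlier_columns:
  fixes C :: "'a :: comm_ring_1 mat" and c :: "nat \<Rightarrow> 'a"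
  assumes C: "C \<in> carrier_mat r r" and k: "k < r" and m: "m \<le> k"
  shows "\<exists>C'\<in>carrier_mat r r. det C' = det C \<and> (\<forall>a<r. \<forall>j<r.
           C' $$ (a, j) = (if j = k then C $$ (a, k) - (\<Sum>l<m. c l * C $$ (a, l)) else C $$ (a, j)))"
  using m
proof (induction m)
  case 0
  then show ?case using C by auto
next
  case (Suc m)
  then obtain C' where C': "C' \<in> carrier_mat r r" "det C' = det C" and entries: "\<forall>a<r. \<forall>j<r.
      C' $$ (a, j) = (if j = k then C $$ (a, k) - (\<Sum>l<m. c l * C $$ (a, l)) else C $$ (a, j))"
    by auto
  have m: "m < k" "m < r" using Suc.prems k by auto
  let ?C'' = "addcol (- c m) k m C'"
  have "?C'' \<in> carrier_mat r r"
    using C' by (intro carrier_matI) (simp_all add: carrier_matD)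
  moreover have "det ?C'' = det C"
    using det_addcol[OF m(2) _ C'(1), of k "- c m"] C'(2) m(1) by simp
  moreover have "?C'' $$ (a, j) = (if j = k then C $$ (a, k) - (\<Sum>l<Suc m. c l * C $$ (a, l))
      else C $$ (a, j))" if a: "a < r" and j: "j < r" for a j
  proof (cases "j = k")
    case True
    have "?C'' $$ (a, k) = - c m * C' $$ (a, m) + C' $$ (a, k)"
      using a k C' by simp
    also have "\<dots> = - c m * C $$ (a, m) + (C $$ (a, k) - (\<Sum>l<m. c l * C $$ (a, l)))"
      using entries a k m by simp
    also have "\<dots> = C $$ (a, k) - (\<Sum>l<Suc m. c l * C $$ (a, l))"
      by (simp add: algebra_simps)
    finally show ?thesis using True by simp
  next
    case False
    then show ?thesis using entries a j C' by simp
  qed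
  ultimately show ?case by blast
qed

lemma gram_schmidt_residual:
  fixes x :: "nat \<Rightarrow> real" and v :: "nat \<Rightarrow> nat \<Rightarrow> real"
  assumes orth: "\<forall>i<k. \<forall>j<k. i \<noteq> j \<longrightarrow> dot r (v i) (v j) = 0"
  defines "y \<equiv> \<lambda>a. x a - (\<Sum>l<k. dot r x (v l) / dot r (v l) (v l) * v l a)"
  shows "\<forall>i<k. dot r y (v i) = 0" and "dot r y y \<le> dot r x x"
proof -
  define c where "c l = dot r x (v l) / dot r (v l) (v l)" for l
  define p where "p a = (\<Sum>l<k. c l * v l a)" for a
  have x_eq: "x = (\<lambda>a. y a + p a)" and y_eq: "y = (\<lambda>a. x a - p a)"
    unfolding y_def p_def c_def by auto
  have dot_p: "dot r p z = (\<Sum>l<k. c l * dot r (v l) z)" for z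
  proof -
    have "dot r p z = (\<Sum>a\<in>{0..<r}. \<Sum>l<k. c l * (v l a * z a))"
      unfolding dot_def p_def by (simp add: sum_distrib_right mult.assoc)
    also have "\<dots> = (\<Sum>l<k. \<Sum>a\<in>{0..<r}. c l * (v l a * z a))"
      by (rule sum.swap)
    finally show ?thesis by (simp add: dot_def sum_distrib_left)
  qed
  have y_orth: "dot r y (v i) = 0" if i: "i < k" for i
  proof -
    have "dot r y (v i) = dot r x (v i) - dot r p (v i)"
      unfolding y_eq dot_def by (simp add: left_diff_distrib sum_subtractf)
    also have "dot r p (v i) = (\<Sum>l<k. if l = i then c i * dot r (v i) (v i) else 0)"
      unfolding dot_p using orth i by (intro sum.cong) (auto simp: dot_comm)
    also have "\<dots> = dot r x (v i)"
    proof (cases "dot r (v i) (v i) = 0")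
      case True
      then have "\<forall>a<r. v i a = 0" by (simp add: dot_self_eq_0_iff)
      then have "dot r x (v i) = 0" by (simp add: dot_def)
      then show ?thesis using i True by simp
    qed (use i in \<open>simp add: c_def\<close>)
    finally show ?thesis by simp
  qed
  then show "\<forall>i<k. dot r y (v i) = 0" by blast
  have "dot r p y = 0"
    unfolding dot_p using y_orth by (intro sum.neutral) (simp add: dot_comm[of r _ y])
  moreover have "dot r x x = dot r y y + 2 * dot r p y + dot r p p"
    unfolding x_eq dot_def by (simp add: algebra_simps sum.distrib sum_distrib_left)
  ultimately show "dot r y y \<le> dot r x x" using dot_self_nonneg[of r p] by simp
qed

lemma orthogonalize_column:
  fixes C :: "real mat"
  assumes C: "C \<in> carrier_mat r r" and k: "k < r"
    and orth: "\<forall>i<k. \<forall>j<k. i \<noteq> j \<longrightarrow> col C i \<bullet> col C j = 0"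
  shows "\<exists>C'\<in>carrier_mat r r. det C' = det C \<and> (\<forall>i<r. col C' i \<bullet> col C' i \<le> col C i \<bullet> col C i)
     \<and> (\<forall>i<Suc k. \<forall>j<Suc k. i \<noteq> j \<longrightarrow> col C' i \<bullet> col C' j = 0)"
proof -
  define v where "v l = (\<lambda>a. C $$ (a, l))" for l
  define c where "c l = dot r (v k) (v l) / dot r (v l) (v l)" for l
  define y where "y = (\<lambda>a. v k a - (\<Sum>l<k. dot r (v k) (v l) / dot r (v l) (v l) * v l a))"
  obtain C' where C': "C' \<in> carrier_mat r r" "det C' = det C" and entries: "\<forall>a<r. \<forall>j<r.
      C' $$ (a, j) = (if j = k then C $$ (a, k) - (\<Sum>l<k. c l * C $$ (a, l)) else C $$ (a, j))"
    using det_subtract_earlier_columns[OF C k le_refl] by blast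
  have inner: "col C i \<bullet> col C j = dot r (v i) (v j)" for i j
    using C by (simp add: inner_col_eq_dot v_def)
  have orth_v: "\<forall>i<k. \<forall>j<k. i \<noteq> j \<longrightarrow> dot r (v i) (v j) = 0"
    using orth by (simp add: inner)
  note residual = gram_schmidt_residual[OF orth_v, of "v k", folded y_def]
  define w where "w j = (if j = k then y else v j)" for j
  have col_C': "C' $$ (a, j) = w j a" if "a < r" "j < r" for a j
    using entries that by (simp add: w_def y_def v_def c_def)
  have "dim_row C' = r" using C' by simp
  then have inner': "col C' i \<bullet> col C' j = dot r (w i) (w j)" if "i < r" "j < r" for i j
    unfolding inner_col_eq_dot \<open>dim_row C' = r\<close> using that by (intro dot_cong) (simp_all add: col_C')
  have "\<forall>i<r. col C' i \<bullet> col C' i \<le> col C i \<bullet> col C i"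
    using residual(2) by (simp add: inner' inner w_def)
  moreover have "col C' i \<bullet> col C' j = 0" if ij: "i < Suc k" "j < Suc k" "i \<noteq> j" for i j
  proof -
    consider "i = k" "j < k" | "j = k" "i < k" | "i < k" "j < k"
      using ij by (auto simp: less_Suc_eq)
    then show ?thesis
      by cases (use residual(1) orth_v k ij(3) in \<open>simp_all add: inner' w_def dot_comm[of r _ y]\<close>)
  qed
  ultimately show ?thesis using C' by blast
qed

lemma orthogonalize_columns:
  fixes M :: "real mat"
  assumes M: "M \<in> carrier_mat r r" and "k \<le> r"
  shows "\<exists>C\<in>carrier_mat r r. det C = det M \<and> (\<forall>i<r. col C i \<bullet> col C i \<le> col M i \<bullet> col M i)
     \<and> (\<forall>i<k. \<forall>j<k. i \<noteq> j \<longrightarrow> col C i \<bullet> col C j = 0)"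
  using \<open>k \<le> r\<close>
proof (induction k)
  case 0
  then show ?case using M by auto
next
  case (Suc k)
  then obtain C where C: "C \<in> carrier_mat r r" "det C = det M"
    "\<forall>i<r. col C i \<bullet> col C i \<le> col M i \<bullet> col M i"
    "\<forall>i<k. \<forall>j<k. i \<noteq> j \<longrightarrow> col C i \<bullet> col C j = 0"
    by auto
  obtain C' where C': "C' \<in> carrier_mat r r" "det C' = det C"
    "\<forall>i<r. col C' i \<bullet> col C' i \<le> col C i \<bullet> col C i"
    "\<forall>i<Suc k. \<forall>j<Suc k. i \<noteq> j \<longrightarrow> col C' i \<bullet> col C' j = 0"
    using orthogonalize_column[OF C(1) _ C(4)] Suc.prems by auto
  show ?case using C C' by (intro bexI[of _ C']) (auto intro: order_trans)
qed

theorem hadamard_inequality: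
  fixes M :: "real mat"
  assumes M: "M \<in> carrier_mat r r"
  shows "(det M)^2 \<le> (\<Prod>i\<in>{0..<r}. col M i \<bullet> col M i)"
proof -
  obtain C where C: "C \<in> carrier_mat r r" "det C = det M"
    "\<forall>i<r. col C i \<bullet> col C i \<le> col M i \<bullet> col M i"
    "\<forall>i<r. \<forall>j<r. i \<noteq> j \<longrightarrow> col C i \<bullet> col C j = 0"
    using orthogonalize_columns[OF M le_refl] by auto
  define G where "G = transpose_mat C * C"
  have G: "G \<in> carrier_mat r r" unfolding G_def using C by simp
  have G_entry: "G $$ (i, j) = col C i \<bullet> col C j" if "i < r" "j < r" for i j
    unfolding G_def using that C by simp
  have "upper_triangular G"
    unfolding upper_triangular_def using G G_entry C(4) by auto
  then have "det G = (\<Prod>i\<in>{0..<r}. col C i \<bullet> col C i)"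
    using det_upper_triangular[OF _ G] G unfolding prod_list_diag_prod by (simp add: G_entry)
  moreover have "det G = det C * det C"
    unfolding G_def using det_mult[of "transpose_mat C" r C] det_transpose[of C r] C by simp
  ultimately have "(det M)^2 = (\<Prod>i\<in>{0..<r}. col C i \<bullet> col C i)"
    using C(2) by (simp add: power2_eq_square)
  also have "\<dots> \<le> (\<Prod>i\<in>{0..<r}. col M i \<bullet> col M i)"
    using C(3) by (intro prod_mono) (auto simp: inner_col_eq_dot dot_self_nonneg)
  finally show ?thesis .
qed

lemma det_one_minus_mult_commute:
  fixes B C :: "'a :: idom mat"
  assumes B: "B \<in> carrier_mat r r" and C: "C \<in> carrier_mat r r"
  shows "det (1\<^sub>m r - B * C) = det (1\<^sub>m r - C * B)"
proof -
  define I :: "'a mat" where "I = 1\<^sub>m r"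
  have I: "I \<in> carrier_mat r r" unfolding I_def by simp
  have D: "I - C * B \<in> carrier_mat r r" using B C by (intro minus_carrier_mat mult_carrier_mat)
  define M where "M = four_block_mat I B C I"
  have "det M = det (I * I - B * C)"
    unfolding M_def by (rule det_four_block_mat[OF I B C I]) (use C I_def in simp)
  then have det_M: "det M = det (1\<^sub>m r - B * C)" unfolding I_def by simp
  define L where "L = four_block_mat I (0\<^sub>m r r) C I"
  define R where "R = four_block_mat I B (0\<^sub>m r r) (I - C * B)"
  have L: "L \<in> carrier_mat (r + r) (r + r)" and R: "R \<in> carrier_mat (r + r) (r + r)"
    unfolding L_def R_def using I B C by auto
  have "L * R = four_block_mat (I * I + 0\<^sub>m r r * 0\<^sub>m r r) (I * B + 0\<^sub>m r r * (I - C * B))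
       (C * I + I * 0\<^sub>m r r) (C * B + I * (I - C * B))"
    unfolding L_def R_def by (rule mult_four_block_mat) (use I B C in auto)
  also have "C * B + I * (I - C * B) = I"
    unfolding I_def by (intro eq_matI) (use B C in auto)
  also have "four_block_mat (I * I + 0\<^sub>m r r * 0\<^sub>m r r) (I * B + 0\<^sub>m r r * (I - C * B))
       (C * I + I * 0\<^sub>m r r) I = M"
    unfolding M_def I_def using B C by simp
  finally have "L * R = M" .
  moreover have "det L = 1"
    unfolding L_def by (subst det_four_block_mat_upper_right_zero[OF I refl C I]) (simp add: I_def)
  moreover have "det R = det (1\<^sub>m r - C * B)"
    unfolding R_def by (subst det_four_block_mat_lower_left_zero[OF I B refl D]) (simp add: I_def)
  ultimately show ?thesis using det_mult[OF L R] det_M by simp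
qed

lemma det_one_plus_rank_one:
  fixes u v :: "nat \<Rightarrow> real"
  assumes r: "0 < r"
  shows "det (1\<^sub>m r + mat r r (\<lambda>(i, j). u i * v j)) = 1 + dot r u v"
proof -
  define B :: "real mat" where "B = mat r r (\<lambda>(i, j). if j = 0 then u i else 0)"
  define C :: "real mat" where "C = mat r r (\<lambda>(i, j). if i = 0 then - v j else 0)"
  have B: "B \<in> carrier_mat r r" and C: "C \<in> carrier_mat r r"
    unfolding B_def C_def by auto
  \<comment> \<open>With these factors, \<open>1 - C * B\<close> is diagonal.\<close>
  have "(B * C) $$ (i, j) = - (u i * v j)" if "i < r" "j < r" for i j
  proof -
    have "(B * C) $$ (i, j) = (\<Sum>l\<in>{0..<r}. B $$ (i, l) * C $$ (l, j))"
      using that B C by (simp add: scalar_prod_def)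
    also have "\<dots> = (\<Sum>l\<in>{0..<r}. if l = 0 then - (u i * v j) else 0)"
      using that by (intro sum.cong) (auto simp: B_def C_def)
    finally show ?thesis using r by simp
  qed
  then have BC: "1\<^sub>m r - B * C = 1\<^sub>m r + mat r r (\<lambda>(i, j). u i * v j)"
    using B C by (intro eq_matI) auto
  define E :: "real mat" where "E = 1\<^sub>m r - C * B"
  have E: "E \<in> carrier_mat r r" unfolding E_def using B C by (intro minus_carrier_mat mult_carrier_mat)
  have CB_00: "(C * B) $$ (0, 0) = - dot r u v"
  proof -
    have "(C * B) $$ (0, 0) = (\<Sum>l\<in>{0..<r}. C $$ (0, l) * B $$ (l, 0))"
      using r B C by (simp add: scalar_prod_def)
    also have "\<dots> = (\<Sum>l\<in>{0..<r}. - (u l * v l))"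
      using r by (intro sum.cong) (auto simp: B_def C_def)
    finally show ?thesis by (simp add: dot_def sum_negf)
  qed
  have CB_other: "(C * B) $$ (i, j) = 0" if "i < r" "j < r" "i \<noteq> 0 \<or> j \<noteq> 0" for i j
  proof -
    have "(C * B) $$ (i, j) = (\<Sum>l\<in>{0..<r}. C $$ (i, l) * B $$ (l, j))"
      using that B C by (simp add: scalar_prod_def)
    also have "\<dots> = 0"
      using that by (intro sum.neutral) (auto simp: B_def C_def)
    finally show ?thesis .
  qed
  have E_entry: "E $$ (i, j) = (if i = j then if i = 0 then 1 + dot r u v else 1 else 0)"
    if "i < r" "j < r" for i j
    unfolding E_def using that B C CB_00 CB_other by auto
  have "upper_triangular E" unfolding upper_triangular_def using E E_entry by auto
  then have "det E = (\<Prod>i\<in>{0..<r}. if i = 0 then 1 + dot r u v else 1)"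
    using det_upper_triangular[OF _ E] E unfolding prod_list_diag_prod by (simp add: E_entry)
  also have "\<dots> = 1 + dot r u v" using r by (simp add: prod.delta)
  finally show ?thesis
    using det_one_minus_mult_commute[OF B C] BC E_def by simp
qed

section \<open>Forster's isotropic position\<close>

definition mat_app :: "nat \<Rightarrow> real mat \<Rightarrow> (nat \<Rightarrow> real) \<Rightarrow> nat \<Rightarrow> real" where
  "mat_app r A w a = (\<Sum>b\<in>{0..<r}. A $$ (a, b) * w b)"

lemma mat_app_mult:
  assumes A: "A \<in> carrier_mat r r" and B: "B \<in> carrier_mat r r" and a: "a < r"
  shows "mat_app r (A * B) w a = mat_app r A (mat_app r B w) a"
proof -
  have "mat_app r (A * B) w a = (\<Sum>b\<in>{0..<r}. \<Sum>c\<in>{0..<r}. A $$ (a, c) * B $$ (c, b) * w b)"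
    unfolding mat_app_def using A B a by (intro sum.cong) (auto simp: scalar_prod_def sum_distrib_right)
  also have "\<dots> = (\<Sum>c\<in>{0..<r}. \<Sum>b\<in>{0..<r}. A $$ (a, c) * B $$ (c, b) * w b)"
    by (rule sum.swap)
  finally show ?thesis
    unfolding mat_app_def by (simp add: sum_distrib_left mult.assoc)
qed

lemma mat_app_rank_one_update:
  assumes "a < r"
  shows "mat_app r (1\<^sub>m r + mat r r (\<lambda>(i, j). z i * z j)) y a = y a + dot r z y * z a"
proof -
  have "mat_app r (1\<^sub>m r + mat r r (\<lambda>(i, j). z i * z j)) y a
      = (\<Sum>b\<in>{0..<r}. (if a = b then y b else 0) + z a * (z b * y b))"
    unfolding mat_app_def using assms by (intro sum.cong) (auto simp: algebra_simps)
  also have "\<dots> = y a + dot r z y * z a"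
    using assms by (simp add: sum.distrib dot_def sum_distrib_left mult.commute)
  finally show ?thesis .
qed

lemma norm_rank_one_update:
  assumes z: "dot r z z = 1"
  defines "P \<equiv> 1\<^sub>m r + mat r r (\<lambda>(i, j). z i * z j)"
  shows "dot r (mat_app r P y) (mat_app r P y) = dot r y y + 3 * (dot r z y)^2"
proof -
  define t where "t = dot r z y"
  have "dot r (mat_app r P y) (mat_app r P y) = dot r (\<lambda>a. y a + t * z a) (\<lambda>a. y a + t * z a)"
    unfolding P_def t_def by (intro dot_cong) (simp_all add: mat_app_rank_one_update mult.commute)
  also have "\<dots> = dot r y y + 2 * t * dot r z y + t^2 * dot r z z"
    unfolding dot_def by (simp add: algebra_simps power2_eq_square sum.distrib sum_distrib_left)
  finally show ?thesis using z by (simp add: t_def power2_eq_square)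
qed

definition block_mat :: "nat \<Rightarrow> (nat \<Rightarrow> nat \<Rightarrow> real) \<Rightarrow> nat \<Rightarrow> real mat" where
  "block_mat r w j = mat r r (\<lambda>(a, i). w (j * r + i) a)"

lemma block_mat_carrier [simp]: "block_mat r w j \<in> carrier_mat r r"
  unfolding block_mat_def by simp

lemma hadamard_mult_block_mat:
  assumes A: "A \<in> carrier_mat r r"
  shows "(det A * det (block_mat r w j))^2
           \<le> (\<Prod>i\<in>{0..<r}. dot r (mat_app r A (w (j * r + i))) (mat_app r A (w (j * r + i))))"
proof -
  have entry: "(A * block_mat r w j) $$ (a, i) = mat_app r A (w (j * r + i)) a"
    if "a < r" "i < r" for a i
    using A that unfolding mat_app_def block_mat_def by (auto simp: scalar_prod_def intro!: sum.cong)
  have dim: "dim_row (A * block_mat r w j) = r" using A by simp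
  have "col (A * block_mat r w j) i \<bullet> col (A * block_mat r w j) i
      = dot r (mat_app r A (w (j * r + i))) (mat_app r A (w (j * r + i)))" if "i < r" for i
    unfolding inner_col_eq_dot dim using that by (intro dot_cong) (simp_all add: entry)
  then show ?thesis
    using hadamard_inequality[of "A * block_mat r w j" r] det_mult[OF A block_mat_carrier] A
    by simp
qed

lemma block_index_less:
  fixes i j q r :: nat
  assumes "j < q" and "i < r"
  shows "j * r + i < q * r"
proof -
  have "j * r + i < Suc j * r" using assms(2) by simp
  also have "\<dots> \<le> q * r" using assms(1) by (intro mult_le_mono1) simp
  finally show ?thesis .
qed

lemma sum_split_blocks:
  fixes q r :: nat and f :: "nat \<Rightarrow> 'a :: comm_monoid_add"
  shows "(\<Sum>k<q * r. f k) = (\<Sum>j<q. \<Sum>i\<in>{0..<r}. f (j * r + i))"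
proof -
  have "(\<Sum>k<q * r. f k) = (\<Sum>j<q. sum f {j * r..<j * r + r})"
    by (rule sum.nat_group[symmetric])
  also have "\<dots> = (\<Sum>j<q. \<Sum>i\<in>{0..<r}. f (j * r + i))"
    using sum.shift_bounds_nat_ivl[of f 0 "j * r" r for j] by (simp add: add.commute)
  finally show ?thesis .
qed

definition log_potential :: "nat \<Rightarrow> nat \<Rightarrow> (nat \<Rightarrow> nat \<Rightarrow> real) \<Rightarrow> real mat \<Rightarrow> real" where
  "log_potential r q w A =
     (\<Sum>k<q * r. ln (dot r (mat_app r A (w k)) (mat_app r A (w k)))) - real q * ln ((det A)^2)"

lemma mat_app_nonzero:
  assumes A: "A \<in> carrier_mat r r" "det A \<noteq> 0"
    and blocks: "\<forall>j<q. det (block_mat r w j) \<noteq> 0" and k: "k < q * r"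
  shows "dot r (mat_app r A (w k)) (mat_app r A (w k)) > 0"
proof -
  define j where "j = k div r"
  define i where "i = k mod r"
  have r: "0 < r" using k by (cases r) auto
  have "k = j * r + i" and "j < q" and "i < r"
    unfolding j_def i_def using k r by (auto simp: less_mult_imp_div_less)
  let ?n = "\<lambda>i. dot r (mat_app r A (w (j * r + i))) (mat_app r A (w (j * r + i)))"
  have "0 < (det A * det (block_mat r w j))^2"
    using A blocks \<open>j < q\<close> by simp
  also have "\<dots> \<le> (\<Prod>i\<in>{0..<r}. ?n i)"
    by (rule hadamard_mult_block_mat[OF A(1)])
  finally have "(\<Prod>i\<in>{0..<r}. ?n i) \<noteq> 0" by linarith
  then have "?n i \<noteq> 0" using \<open>i < r\<close> by (simp add: prod_zero_iff)
  then show ?thesis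
    using dot_self_nonneg \<open>k = j * r + i\<close> by (simp add: order_less_le)
qed

lemma log_potential_lower_bound:
  assumes A: "A \<in> carrier_mat r r" "det A \<noteq> 0" and blocks: "\<forall>j<q. det (block_mat r w j) \<noteq> 0"
  shows "(\<Sum>j<q. ln ((det (block_mat r w j))^2)) \<le> log_potential r q w A"
proof -
  let ?n = "\<lambda>k. dot r (mat_app r A (w k)) (mat_app r A (w k))"
  have block: "ln ((det A)^2) + ln ((det (block_mat r w j))^2) \<le> (\<Sum>i\<in>{0..<r}. ln (?n (j * r + i)))"
    if j: "j < q" for j
  proof -
    have pos: "?n (j * r + i) > 0" if "i < r" for i
      using mat_app_nonzero[OF A blocks] block_index_less[OF j that] by blast
    have "ln ((det A)^2) + ln ((det (block_mat r w j))^2) = ln ((det A * det (block_mat r w j))^2)"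
      using A blocks j by (simp add: power_mult_distrib ln_mult)
    also have "\<dots> \<le> ln (\<Prod>i\<in>{0..<r}. ?n (j * r + i))"
      using hadamard_mult_block_mat[OF A(1)] A blocks j by (subst ln_le_cancel_iff) (auto intro!: prod_pos pos)
    also have "\<dots> = (\<Sum>i\<in>{0..<r}. ln (?n (j * r + i)))"
      using pos by (intro ln_prod) (auto simp: order_less_le)
    finally show ?thesis .
  qed
  have "(\<Sum>k<q * r. ln (?n k)) = (\<Sum>j<q. \<Sum>i\<in>{0..<r}. ln (?n (j * r + i)))"
    by (rule sum_split_blocks)
  also have "\<dots> \<ge> (\<Sum>j<q. ln ((det A)^2) + ln ((det (block_mat r w j))^2))"
    using block by (intro sum_mono) auto
  finally show ?thesis
    unfolding log_potential_def by (simp add: sum.distrib)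
qed

lemma det_rank_one_update:
  assumes r: "0 < r" and z: "dot r z z = 1" and A: "A \<in> carrier_mat r r"
  shows "det ((1\<^sub>m r + mat r r (\<lambda>(i, j). z i * z j)) * A) = 2 * det A"
proof -
  have "1\<^sub>m r + mat r r (\<lambda>(i, j). z i * z j) \<in> carrier_mat r r" by simp
  then show ?thesis using det_mult[OF _ A] det_one_plus_rank_one[OF r, of z z] z by simp
qed

lemma log_potential_rank_one_step:
  assumes r: "0 < r" and A: "A \<in> carrier_mat r r" "det A \<noteq> 0"
    and blocks: "\<forall>j<q. det (block_mat r w j) \<noteq> 0" and z: "dot r z z = 1"
  defines "P \<equiv> 1\<^sub>m r + mat r r (\<lambda>(i, j). z i * z j)"
  shows "log_potential r q w (P * A) \<le> log_potential r q w A - real q * ln 4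
     + 3 * (\<Sum>k<q * r. (dot r z (mat_app r A (w k)))^2 / dot r (mat_app r A (w k)) (mat_app r A (w k)))"
proof -
  define y where "y k = mat_app r A (w k)" for k
  define s where "s k = (dot r z (y k))^2 / dot r (y k) (y k)" for k
  have P: "P \<in> carrier_mat r r" unfolding P_def by simp
  have det_PA: "det (P * A) = 2 * det A"
    unfolding P_def by (rule det_rank_one_update[OF r z A(1)])
  have ln_le: "ln (dot r (mat_app r (P * A) (w k)) (mat_app r (P * A) (w k))) \<le> ln (dot r (y k) (y k)) + 3 * s k"
    if k: "k < q * r" for k
  proof -
    have pos: "dot r (y k) (y k) > 0"
      unfolding y_def by (rule mat_app_nonzero[OF A blocks k])
    have "dot r (mat_app r (P * A) (w k)) (mat_app r (P * A) (w k)) = dot r (mat_app r P (y k)) (mat_app r P (y k))"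
      unfolding y_def using P A by (intro dot_cong) (simp_all add: mat_app_mult)
    also have "\<dots> = dot r (y k) (y k) * (1 + 3 * s k)"
      unfolding P_def norm_rank_one_update[OF z] s_def using pos by (simp add: field_simps)
    finally have "ln (dot r (mat_app r (P * A) (w k)) (mat_app r (P * A) (w k))) = ln (dot r (y k) (y k)) + ln (1 + 3 * s k)"
      using pos by (simp add: ln_mult_pos s_def add_pos_nonneg)
    also have "ln (1 + 3 * s k) \<le> 3 * s k"
      using pos by (intro ln_add_one_self_le_self) (simp add: s_def)
    finally show ?thesis by simp
  qed
  have "ln ((det (P * A))^2) = ln 4 + ln ((det A)^2)"
    using det_PA A by (simp add: power_mult_distrib ln_mult)
  then show ?thesis
    using sum_mono[of "{..<q * r}", OF ln_le]
    unfolding log_potential_def s_def y_def by (simp add: sum.distrib sum_distrib_left algebra_simps)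
qed

theorem isotropic_position:
  assumes r: "0 < r" and q: "0 < q" and blocks: "\<forall>j<q. det (block_mat r w j) \<noteq> 0"
  shows "\<exists>A\<in>carrier_mat r r. det A \<noteq> 0 \<and>
     (\<forall>k<q * r. dot r (mat_app r A (w k)) (mat_app r A (w k)) > 0) \<and>
     (\<forall>z. dot r z z = 1 \<longrightarrow>
        real q / 6 \<le> (\<Sum>k<q * r. (dot r z (mat_app r A (w k)))^2 / dot r (mat_app r A (w k)) (mat_app r A (w k))))"
proof -
  define G where "G = {A \<in> carrier_mat r r. det A \<noteq> (0::real)}"
  define F where "F = log_potential r q w"
  have bdd: "bdd_below (F ` G)"
    using log_potential_lower_bound[OF _ _ blocks] unfolding F_def G_def by (intro bdd_belowI2) auto
  have "1\<^sub>m r \<in> G" unfolding G_def by simp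
  then obtain A0 where A0: "A0 \<in> G" "F A0 < Inf (F ` G) + real q / 2"
    using cInf_less_iff[OF _ bdd, of "Inf (F ` G) + real q / 2"] q by fastforce
  then have A0': "A0 \<in> carrier_mat r r" "det A0 \<noteq> 0" unfolding G_def by auto
  have "real q / 6 \<le> (\<Sum>k<q * r. (dot r z (mat_app r A0 (w k)))^2 / dot r (mat_app r A0 (w k)) (mat_app r A0 (w k)))"
    (is "_ \<le> ?s") if z: "dot r z z = 1" for z
  proof -
    define P where "P = 1\<^sub>m r + mat r r (\<lambda>(i, j). z i * z j)"
    have "P \<in> carrier_mat r r" unfolding P_def by simp
    moreover have "det (P * A0) = 2 * det A0"
      unfolding P_def by (rule det_rank_one_update[OF r z A0'(1)])
    ultimately have "P * A0 \<in> G" using A0' unfolding G_def by simp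
    then have "Inf (F ` G) \<le> F (P * A0)" using bdd by (intro cInf_lower) auto
    also have "\<dots> \<le> F A0 - real q * ln 4 + 3 * ?s"
      unfolding F_def P_def by (rule log_potential_rank_one_step[OF r A0' blocks z])
    finally have "real q * ln 4 - real q / 2 < 3 * ?s" using A0(2) by simp
    moreover have "1 < ln (4::real)"
      using exp_le ln_less_cancel_iff[of "exp 1" 4] by simp
    then have "real q \<le> real q * ln 4"
      using q by (simp add: mult_le_cancel_left1)
    ultimately show ?thesis by simp
  qed
  then show ?thesis using A0' mat_app_nonzero[OF A0' blocks] by blast
qed

section \<open>Sign representations of orthogonal sign matrices\<close>

lemma finite_singular_shifts:
  fixes U :: "real mat"
  assumes U: "U \<in> carrier_mat r r"
  shows "finite {e. det (U + e \<cdot>\<^sub>m 1\<^sub>m r) = 0}"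
proof -
  have "char_poly U \<noteq> 0" using degree_monic_char_poly[OF U] by auto
  then have "finite {x. poly (char_poly U) x = 0}" by (rule poly_roots_finite)
  moreover have "{e. det (U + e \<cdot>\<^sub>m 1\<^sub>m r) = 0} \<subseteq> uminus ` {x. poly (char_poly U) x = 0}"
  proof
    fix e assume "e \<in> {e. det (U + e \<cdot>\<^sub>m 1\<^sub>m r) = 0}"
    then have "det (char_matrix U (- e)) = 0" unfolding char_matrix_def using U by simp
    then have "poly (char_poly U) (- e) = 0"
      using eigenvalue_det[OF U] eigenvalue_root_char_poly[OF U] by simp
    then show "e \<in> uminus ` {x. poly (char_poly U) x = 0}" by force
  qed
  ultimately show ?thesis by (meson finite_imageI finite_subset)
qed

lemma sgn_add_small:
  fixes d e :: real
  assumes "\<bar>e\<bar> < \<bar>d\<bar>"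
  shows "sgn (d + e) = sgn d"
  using assms unfolding sgn_if abs_if by (auto split: if_splits)

lemma dot_add_unit_coordinate:
  assumes "i < r"
  shows "dot r (\<lambda>a. u a + (if a = i then e else 0)) z = dot r u z + e * z i"
proof -
  have "dot r (\<lambda>a. u a + (if a = i then e else 0)) z
      = (\<Sum>a\<in>{0..<r}. u a * z a + (if a = i then e * z a else 0))"
    unfolding dot_def by (intro sum.cong) (auto simp: distrib_right)
  also have "\<dots> = dot r u z + e * z i"
    using assms by (simp add: sum.distrib dot_def)
  finally show ?thesis .
qed

lemma perturb_to_nonsingular_blocks:
  fixes u :: "nat \<Rightarrow> nat \<Rightarrow> real" and v :: "'y \<Rightarrow> nat \<Rightarrow> real"
  assumes Y: "finite Y" and nonzero: "\<forall>k<q * r. \<forall>y\<in>Y. dot r (u k) (v y) \<noteq> 0"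
  shows "\<exists>w. (\<forall>j<q. det (block_mat r w j) \<noteq> 0) \<and>
           (\<forall>k<q * r. \<forall>y\<in>Y. sgn (dot r (w k) (v y)) = sgn (dot r (u k) (v y)))"
proof -
  define margin where "margin = Min (insert 1 ((\<lambda>(k, y, i). \<bar>dot r (u k) (v y)\<bar> / (\<bar>v y i\<bar> + 1))
      ` ({..<q * r} \<times> Y \<times> {..<r})))"
  have margin_pos: "0 < margin"
    unfolding margin_def using Y nonzero by (subst Min_gr_iff) (auto intro!: divide_pos_pos)
  have margin_le: "margin * (\<bar>v y i\<bar> + 1) \<le> \<bar>dot r (u k) (v y)\<bar>"
    if "k < q * r" "y \<in> Y" "i < r" for k y i
  proof -
    have "margin \<le> \<bar>dot r (u k) (v y)\<bar> / (\<bar>v y i\<bar> + 1)"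
      unfolding margin_def using Y that by (intro Min_le) (auto intro!: image_eqI[of _ _ "(k, y, i)"])
    then show ?thesis by (simp add: pos_le_divide_eq add_nonneg_pos)
  qed
  define bad where "bad = (\<Union>j<q. {e. det (block_mat r u j + e \<cdot>\<^sub>m 1\<^sub>m r) = 0})"
  have "finite bad" unfolding bad_def by (intro finite_UN_I finite_singular_shifts) auto
  then have "infinite ({0<..<margin} - bad)" using margin_pos by (simp add: Diff_infinite_finite)
  then obtain e where e: "0 < e" "e < margin" "e \<notin> bad"
    by (metis Diff_iff ex_in_conv finite.emptyI greaterThanLessThan_iff)
  define w where "w k a = u k a + (if a = k mod r then e else 0)" for k a
  have "block_mat r w j = block_mat r u j + e \<cdot>\<^sub>m 1\<^sub>m r" for j
    by (rule eq_matI) (auto simp: block_mat_def w_def)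
  then have "\<forall>j<q. det (block_mat r w j) \<noteq> 0" using e(3) unfolding bad_def by auto
  moreover have "sgn (dot r (w k) (v y)) = sgn (dot r (u k) (v y))" if k: "k < q * r" and y: "y \<in> Y" for k y
  proof -
    have i: "k mod r < r" using k by (cases r) auto
    have "\<bar>e * v y (k mod r)\<bar> \<le> e * (\<bar>v y (k mod r)\<bar> + 1)"
      using e(1) by (simp add: abs_mult)
    also have "\<dots> < margin * (\<bar>v y (k mod r)\<bar> + 1)"
      using e(2) by (intro mult_strict_right_mono) (auto simp: add_nonneg_pos)
    also have "\<dots> \<le> \<bar>dot r (u k) (v y)\<bar>" by (rule margin_le[OF k y i])
    finally show ?thesis
      unfolding w_def dot_add_unit_coordinate[OF i] by (rule sgn_add_small)
  qed
  ultimately show ?thesis by blast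
qed

definition normalized :: "nat \<Rightarrow> (nat \<Rightarrow> real) \<Rightarrow> nat \<Rightarrow> real" where
  "normalized r y a = y a / sqrt (dot r y y)"

lemma dot_normalized_left: "dot r (normalized r y) z = dot r y z / sqrt (dot r y y)"
  unfolding dot_def normalized_def by (simp add: sum_divide_distrib)

lemma dot_normalized_right: "dot r y (normalized r z) = dot r y z / sqrt (dot r z z)"
  using dot_normalized_left[of r z y] by (simp add: dot_comm)

lemma dot_normalized_self:
  assumes "0 < dot r y y"
  shows "dot r (normalized r y) (normalized r y) = 1"
  using assms by (simp add: dot_normalized_left dot_normalized_right real_sqrt_mult[symmetric])

lemma abs_dot_le_1:
  assumes "dot r y y = 1" and "dot r z z = 1"
  shows "\<bar>dot r y z\<bar> \<le> 1"
proof -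
  have "dot r (\<lambda>a. y a - z a) (\<lambda>a. y a - z a) = dot r y y + dot r z z - 2 * dot r y z"
   and "dot r (\<lambda>a. y a + z a) (\<lambda>a. y a + z a) = dot r y y + dot r z z + 2 * dot r y z"
    unfolding dot_def by (simp_all add: algebra_simps sum.distrib sum_subtractf sum_distrib_left)
  then show ?thesis
    using assms dot_self_nonneg[of r "\<lambda>a. y a - z a"] dot_self_nonneg[of r "\<lambda>a. y a + z a"]
    by (simp add: abs_le_iff)
qed

lemma dot_self_pos_of_dot_neq_0:
  assumes "dot r y z \<noteq> 0"
  shows "0 < dot r z z"
proof -
  have "\<not> (\<forall>a<r. z a = 0)"
  proof
    assume "\<forall>a<r. z a = 0"
    then have "dot r y z = 0" unfolding dot_def by (intro sum.neutral) auto
    with assms show False by simp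
  qed
  then show ?thesis by (metis dot_self_eq_0_iff dot_self_nonneg order_less_le)
qed

lemma dot_mat_app_transpose:
  assumes A: "A \<in> carrier_mat r r" and B: "B \<in> carrier_mat r r" and BA: "B * A = 1\<^sub>m r"
  shows "dot r (mat_app r A w) (mat_app r (transpose_mat B) v) = dot r w v"
proof -
  have "dot r (mat_app r A w) (mat_app r (transpose_mat B) v) =
      (\<Sum>a\<in>{0..<r}. (\<Sum>b\<in>{0..<r}. A $$ (a, b) * w b) * (\<Sum>c\<in>{0..<r}. B $$ (c, a) * v c))"
    unfolding dot_def mat_app_def using B by (intro sum.cong refl) (auto intro!: sum.cong)
  also have "\<dots> = (\<Sum>a\<in>{0..<r}. \<Sum>b\<in>{0..<r}. \<Sum>c\<in>{0..<r}. w b * v c * (B $$ (c, a) * A $$ (a, b)))"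
    by (simp add: sum_distrib_left sum_distrib_right mult_ac)
  also have "\<dots> = (\<Sum>b\<in>{0..<r}. \<Sum>c\<in>{0..<r}. \<Sum>a\<in>{0..<r}. w b * v c * (B $$ (c, a) * A $$ (a, b)))"
    by (subst sum.swap) (rule sum.cong[OF refl], rule sum.swap)
  also have "\<dots> = (\<Sum>b\<in>{0..<r}. \<Sum>c\<in>{0..<r}. w b * v c * (B * A) $$ (c, b))"
    using A B by (intro sum.cong refl) (simp add: scalar_prod_def sum_distrib_left)
  also have "\<dots> = dot r w v"
    unfolding BA dot_def by (intro sum.cong refl) (simp add: if_distrib cong: if_cong)
  finally show ?thesis .
qed

lemma isotropic_unit_representation:
  fixes w :: "nat \<Rightarrow> nat \<Rightarrow> real" and v :: "'y \<Rightarrow> nat \<Rightarrow> real"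
  assumes r: "0 < r" and q: "0 < q" and blocks: "\<forall>j<q. det (block_mat r w j) \<noteq> 0"
    and nonzero: "\<forall>k<q * r. \<forall>y\<in>Y. dot r (w k) (v y) \<noteq> 0"
  shows "\<exists>W Z. (\<forall>k<q * r. dot r (W k) (W k) = 1) \<and> (\<forall>y\<in>Y. dot r (Z y) (Z y) = 1) \<and>
     (\<forall>k<q * r. \<forall>y\<in>Y. sgn (dot r (W k) (Z y)) = sgn (dot r (w k) (v y))) \<and>
     (\<forall>y\<in>Y. real q / 6 \<le> (\<Sum>k<q * r. (dot r (W k) (Z y))^2))"
proof -
  obtain A where A: "A \<in> carrier_mat r r" "det A \<noteq> 0"
    and pos: "\<forall>k<q * r. 0 < dot r (mat_app r A (w k)) (mat_app r A (w k))"
    and iso: "\<forall>z. dot r z z = 1 \<longrightarrow> real q / 6 \<le> (\<Sum>k<q * r.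
                 (dot r z (mat_app r A (w k)))^2 / dot r (mat_app r A (w k)) (mat_app r A (w k)))"
    using isotropic_position[OF r q blocks] by blast
  obtain B where B: "B \<in> carrier_mat r r" "B * A = 1\<^sub>m r"
    using det_non_zero_imp_unit[OF A, unfolded Units_def, of "()"] by (auto simp: ring_mat_def)
  define y where "y k = mat_app r A (w k)" for k
  define z where "z y' = mat_app r (transpose_mat B) (v y')" for y'
  have transfer: "dot r (y k) (z y') = dot r (w k) (v y')" for k y'
    unfolding y_def z_def by (rule dot_mat_app_transpose[OF A(1) B])
  have z_pos: "0 < dot r (z y') (z y')" if "y' \<in> Y" for y'
    using nonzero that q r by (intro dot_self_pos_of_dot_neq_0[of r "y 0"]) (simp add: transfer)
  define W where "W k = normalized r (y k)" for k
  define Z where "Z y' = normalized r (z y')" for y'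
  have W_Z: "dot r (W k) (Z y') = dot r (w k) (v y') / sqrt (dot r (y k) (y k)) / sqrt (dot r (z y') (z y'))"
    for k y'
    unfolding W_def Z_def dot_normalized_left dot_normalized_right transfer ..
  have "real q / 6 \<le> (\<Sum>k<q * r. (dot r (W k) (Z y'))^2)" if y': "y' \<in> Y" for y'
  proof -
    have "dot r (Z y') (Z y') = 1" unfolding Z_def by (rule dot_normalized_self[OF z_pos[OF y']])
    then have "real q / 6 \<le> (\<Sum>k<q * r. (dot r (Z y') (y k))^2 / dot r (y k) (y k))"
      using iso unfolding y_def by blast
    also have "\<dots> = (\<Sum>k<q * r. (dot r (W k) (Z y'))^2)"
      unfolding W_def dot_normalized_left dot_comm[of r "Z y'"]
      by (simp add: power_divide dot_self_nonneg)
    finally show ?thesis .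
  qed
  moreover have "sgn (dot r (W k) (Z y')) = sgn (dot r (w k) (v y'))" if "k < q * r" "y' \<in> Y" for k y'
    unfolding W_Z using pos z_pos that unfolding y_def by simp
  moreover have "\<forall>k<q * r. dot r (W k) (W k) = 1" "\<forall>y'\<in>Y. dot r (Z y') (Z y') = 1"
    unfolding W_def Z_def y_def using pos z_pos by (simp_all add: dot_normalized_self)
  ultimately show ?thesis by blast
qed

lemma isotropic_sign_representation:
  fixes u :: "nat \<Rightarrow> nat \<Rightarrow> real" and v :: "'y \<Rightarrow> nat \<Rightarrow> real"
  assumes Y: "finite Y" and r: "0 < r" and q: "0 < q"
    and nonzero: "\<forall>k<q * r. \<forall>y\<in>Y. dot r (u k) (v y) \<noteq> 0"
  shows "\<exists>W Z. (\<forall>k<q * r. dot r (W k) (W k) = 1) \<and> (\<forall>y\<in>Y. dot r (Z y) (Z y) = 1) \<and>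
     (\<forall>k<q * r. \<forall>y\<in>Y. sgn (dot r (W k) (Z y)) = sgn (dot r (u k) (v y))) \<and>
     (\<forall>y\<in>Y. real q / 6 \<le> (\<Sum>k<q * r. (dot r (W k) (Z y))^2))"
proof -
  obtain w where blocks: "\<forall>j<q. det (block_mat r w j) \<noteq> 0"
    and w: "\<forall>k<q * r. \<forall>y\<in>Y. sgn (dot r (w k) (v y)) = sgn (dot r (u k) (v y))"
    using perturb_to_nonsingular_blocks[OF Y nonzero] by blast
  have "dot r (w k) (v y) \<noteq> 0" if "k < q * r" "y \<in> Y" for k y
  proof
    assume "dot r (w k) (v y) = 0"
    moreover have "sgn (dot r (w k) (v y)) = sgn (dot r (u k) (v y))" using w that by blast
    ultimately have "sgn (dot r (u k) (v y)) = 0" by simp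
    then show False using nonzero that by (simp add: sgn_0_0)
  qed
  then have "\<forall>k<q * r. \<forall>y\<in>Y. dot r (w k) (v y) \<noteq> 0" by blast
  then obtain W Z where W: "\<forall>k<q * r. dot r (W k) (W k) = 1" and Z: "\<forall>y\<in>Y. dot r (Z y) (Z y) = 1"
    and WZ: "\<forall>k<q * r. \<forall>y\<in>Y. sgn (dot r (W k) (Z y)) = sgn (dot r (w k) (v y))"
    and iso: "\<forall>y\<in>Y. real q / 6 \<le> (\<Sum>k<q * r. (dot r (W k) (Z y))^2)"
    using isotropic_unit_representation[OF r q blocks, of Y v] by blast
  have "\<forall>k<q * r. \<forall>y\<in>Y. sgn (dot r (W k) (Z y)) = sgn (dot r (u k) (v y))"
    using WZ w by simp
  then show ?thesis using W Z iso by blast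
qed

lemma dot_le_amgm:
  assumes t: "0 < t"
  shows "dot r y z \<le> (t * dot r y y + dot r z z / t) / 2"
proof -
  have "0 \<le> dot r (\<lambda>a. t * y a - z a) (\<lambda>a. t * y a - z a)" by (rule dot_self_nonneg)
  also have "\<dots> = t^2 * dot r y y - 2 * t * dot r y z + dot r z z"
    unfolding dot_def
    by (simp add: algebra_simps power2_eq_square sum.distrib sum_subtractf sum_distrib_left)
  finally have "2 * t * dot r y z \<le> t^2 * dot r y y + dot r z z" by simp
  then show ?thesis using t by (simp add: field_simps power2_eq_square)
qed

lemma orthogonal_rows_energy:
  fixes H :: "'x \<Rightarrow> 'y \<Rightarrow> real" and Z :: "'y \<Rightarrow> nat \<Rightarrow> real"
  assumes Y: "finite Y"
    and orth: "\<forall>y\<in>Y. \<forall>y'\<in>Y. (\<Sum>x\<in>X. H x y * H x y') = (if y = y' then c else 0)"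
  defines "G \<equiv> \<lambda>x a. \<Sum>y\<in>Y. H x y * Z y a"
  shows "(\<Sum>x\<in>X. dot r (G x) (G x)) = c * (\<Sum>y\<in>Y. dot r (Z y) (Z y))"
proof -
  have "(\<Sum>x\<in>X. dot r (G x) (G x))
      = (\<Sum>x\<in>X. \<Sum>a\<in>{0..<r}. \<Sum>y\<in>Y. \<Sum>y'\<in>Y. (H x y * H x y') * (Z y a * Z y' a))"
    unfolding G_def dot_def by (simp add: sum_product mult_ac)
  also have "\<dots> = (\<Sum>a\<in>{0..<r}. \<Sum>x\<in>X. \<Sum>y\<in>Y. \<Sum>y'\<in>Y. (H x y * H x y') * (Z y a * Z y' a))"
    by (rule sum.swap)
  also have "\<dots> = (\<Sum>a\<in>{0..<r}. \<Sum>y\<in>Y. \<Sum>y'\<in>Y. (\<Sum>x\<in>X. H x y * H x y') * (Z y a * Z y' a))"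
    by (simp add: sum_distrib_right sum.swap[of _ X])
  also have "\<dots> = (\<Sum>a\<in>{0..<r}. \<Sum>y\<in>Y. \<Sum>y'\<in>Y. if y = y' then c * (Z y a * Z y a) else 0)"
    using orth by (intro sum.cong refl) auto
  also have "\<dots> = (\<Sum>a\<in>{0..<r}. \<Sum>y\<in>Y. c * (Z y a * Z y a))"
    using Y by simp
  also have "\<dots> = c * (\<Sum>y\<in>Y. dot r (Z y) (Z y))"
    unfolding dot_def by (simp add: sum_distrib_left sum.swap[of _ "{0..<r}"])
  finally show ?thesis .
qed

lemma orthogonal_sign_matrix_correlation_le:
  fixes H :: "'x \<Rightarrow> 'y \<Rightarrow> real" and x :: "nat \<Rightarrow> 'x"
    and W :: "nat \<Rightarrow> nat \<Rightarrow> real" and Z :: "'y \<Rightarrow> nat \<Rightarrow> real"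
  assumes X: "finite X" and Y: "finite Y" and card_Y: "card Y = N"
    and orth: "\<forall>y\<in>Y. \<forall>y'\<in>Y. (\<Sum>x\<in>X. H x y * H x y') = (if y = y' then real N else 0)"
    and x: "inj_on x {..<m}" "x ` {..<m} \<subseteq> X"
    and W: "\<forall>k<m. dot r (W k) (W k) = 1" and Z: "\<forall>y\<in>Y. dot r (Z y) (Z y) = 1"
    and t: "0 < t"
  shows "(\<Sum>y\<in>Y. \<Sum>k<m. H (x k) y * dot r (W k) (Z y)) \<le> (t * real m + real N * real N / t) / 2"
proof -
  define G where "G x' a = (\<Sum>y\<in>Y. H x' y * Z y a)" for x' a
  have "(\<Sum>y\<in>Y. \<Sum>k<m. H (x k) y * dot r (W k) (Z y))
      = (\<Sum>y\<in>Y. \<Sum>k<m. \<Sum>a\<in>{0..<r}. H (x k) y * (W k a * Z y a))"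
    unfolding dot_def by (simp add: sum_distrib_left)
  also have "\<dots> = (\<Sum>k<m. \<Sum>a\<in>{0..<r}. \<Sum>y\<in>Y. H (x k) y * (W k a * Z y a))"
    by (subst sum.swap) (rule sum.cong[OF refl], rule sum.swap)
  also have "\<dots> = (\<Sum>k<m. dot r (W k) (G (x k)))"
    unfolding G_def dot_def by (simp add: sum_distrib_left mult_ac)
  also have "\<dots> \<le> (\<Sum>k<m. (t * dot r (W k) (W k) + dot r (G (x k)) (G (x k)) / t) / 2)"
    by (intro sum_mono dot_le_amgm[OF t])
  also have "\<dots> = (t * real m + (\<Sum>k<m. dot r (G (x k)) (G (x k))) / t) / 2"
    using W by (simp add: sum.distrib sum_divide_distrib[symmetric])
  also have "\<dots> \<le> (t * real m + real N * real N / t) / 2"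
  proof -
    have "(\<Sum>k<m. dot r (G (x k)) (G (x k))) = (\<Sum>x'\<in>x ` {..<m}. dot r (G x') (G x'))"
      by (simp add: sum.reindex[OF x(1)])
    also have "\<dots> \<le> (\<Sum>x'\<in>X. dot r (G x') (G x'))"
      using x(2) X by (intro sum_mono2) (auto simp: dot_self_nonneg)
    also have "\<dots> = real N * real N"
      using orthogonal_rows_energy[OF Y orth, of r Z] Z card_Y unfolding G_def by simp
    finally show ?thesis using t by (simp add: divide_right_mono)
  qed
  finally show ?thesis .
qed

lemma isotropic_sign_pattern_bound:
  fixes H :: "'x \<Rightarrow> 'y \<Rightarrow> real" and x :: "nat \<Rightarrow> 'x"
    and W :: "nat \<Rightarrow> nat \<Rightarrow> real" and Z :: "'y \<Rightarrow> nat \<Rightarrow> real"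
  assumes X: "finite X" and Y: "finite Y" and card_Y: "card Y = N" and N: "0 < N"
    and orth: "\<forall>y\<in>Y. \<forall>y'\<in>Y. (\<Sum>x\<in>X. H x y * H x y') = (if y = y' then real N else 0)"
    and H: "\<forall>x\<in>X. \<forall>y\<in>Y. H x y = 1 \<or> H x y = -1"
    and x: "inj_on x {..<m}" "x ` {..<m} \<subseteq> X"
    and W: "\<forall>k<m. dot r (W k) (W k) = 1" and Z: "\<forall>y\<in>Y. dot r (Z y) (Z y) = 1"
    and sign: "\<forall>k<m. \<forall>y\<in>Y. 0 < H (x k) y * dot r (W k) (Z y)"
    and iso: "\<forall>y\<in>Y. c \<le> (\<Sum>k<m. (dot r (W k) (Z y))^2)"
  shows "c \<le> sqrt (real m)"
proof -
  have sq_le: "(dot r (W k) (Z y))^2 \<le> H (x k) y * dot r (W k) (Z y)" if "k < m" "y \<in> Y" for k y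
  proof -
    have "H (x k) y * dot r (W k) (Z y) = \<bar>dot r (W k) (Z y)\<bar>"
      using H sign x(2) that by (metis abs_of_pos abs_minus_cancel image_subset_iff lessThan_iff
          mult_1 mult_minus_left)
    moreover have "\<bar>dot r (W k) (Z y)\<bar> \<le> 1" using abs_dot_le_1 W Z that by blast
    ultimately show ?thesis
      by (metis abs_ge_zero mult_left_le power2_eq_square power2_abs)
  qed
  have "real N * c = (\<Sum>y\<in>Y. c)" using card_Y by simp
  also have "\<dots> \<le> (\<Sum>y\<in>Y. \<Sum>k<m. (dot r (W k) (Z y))^2)"
    using iso by (intro sum_mono) simp
  also have "\<dots> \<le> (\<Sum>y\<in>Y. \<Sum>k<m. H (x k) y * dot r (W k) (Z y))"
    using sq_le by (intro sum_mono) simp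
  finally have lower: "real N * c \<le> (\<Sum>y\<in>Y. \<Sum>k<m. H (x k) y * dot r (W k) (Z y))" .
  show ?thesis
  proof (cases "m = 0")
    case True
    then show ?thesis using iso card_Y N by (auto simp: card_gt_0_iff)
  next
    case False
    define t where "t = real N / sqrt (real m)"
    have t: "0 < t" unfolding t_def using N False by simp
    have "(t * real m + real N * real N / t) / 2 = real N * sqrt (real m)"
      unfolding t_def using N False by (simp add: field_simps real_div_sqrt)
    then have "real N * c \<le> real N * sqrt (real m)"
      using lower orthogonal_sign_matrix_correlation_le[OF X Y card_Y orth x W Z t] by linarith
    then show ?thesis using N by simp
  qed
qed

lemma le_36_mult_of_sqrt_bound:
  fixes q r :: nat
  assumes "real q / 6 \<le> sqrt (real (q * r))" and "0 < q"
  shows "real q \<le> 36 * real r"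
proof -
  have "(real q / 6)^2 \<le> (sqrt (real (q * r)))^2"
    using assms(1) by (rule power_mono) simp
  then have "real q * real q \<le> real q * (36 * real r)"
    by (simp add: power2_eq_square field_simps)
  then show ?thesis using assms(2) by simp
qed

theorem sign_rank_lower_bound:
  fixes H :: "'x \<Rightarrow> 'y \<Rightarrow> real" and u :: "'x \<Rightarrow> nat \<Rightarrow> real" and v :: "'y \<Rightarrow> nat \<Rightarrow> real"
  assumes X: "finite X" "card X = N" and Y: "finite Y" "card Y = N"
    and orth: "\<forall>y\<in>Y. \<forall>y'\<in>Y. (\<Sum>x\<in>X. H x y * H x y') = (if y = y' then real N else 0)"
    and H: "\<forall>x\<in>X. \<forall>y\<in>Y. H x y = 1 \<or> H x y = -1"
    and sign: "\<forall>x\<in>X. \<forall>y\<in>Y. 0 < H x y * dot r (u x) (v y)"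
  shows "real N \<le> 37 * (real r)^2"
proof (cases "N < r")
  case True
  then have "N \<le> r * r" by (metis le_square less_imp_le_nat order_trans)
  then have "real N \<le> real r * real r" by (metis of_nat_le_iff of_nat_mult)
  moreover have "0 \<le> real r * real r" by simp
  ultimately show ?thesis unfolding power2_eq_square by linarith
next
  case False
  show ?thesis
  proof (cases "N = 0")
    case False
    then have "0 < N" by simp
    then obtain x0 y0 where "x0 \<in> X" "y0 \<in> Y" using X Y by fastforce
    then have "dot r (u x0) (v y0) \<noteq> 0" using sign by fastforce
    then have r: "0 < r" by (cases r) (auto simp: dot_def)
    define q where "q = N div r"
    have q: "0 < q" unfolding q_def using \<open>\<not> N < r\<close> r by (simp add: div_greater_zero_iff)
    have N_less: "N < q * r + r"
      unfolding q_def using mod_less_divisor[OF r, of N] div_mult_mod_eq[of N r] by linarith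
    have "q * r \<le> N" unfolding q_def by (rule div_times_less_eq_dividend)
    obtain e where "bij_betw e {0..<N} X" using ex_bij_betw_nat_finite X by blast
    then have x: "inj_on e {..<q * r}" "e ` {..<q * r} \<subseteq> X"
      using \<open>q * r \<le> N\<close> by (auto simp: bij_betw_def intro: inj_on_subset)
    then have sign_e: "\<forall>k<q * r. \<forall>y\<in>Y. 0 < H (e k) y * dot r (u (e k)) (v y)"
      using sign by auto
    then have "\<forall>k<q * r. \<forall>y\<in>Y. dot r (u (e k)) (v y) \<noteq> 0"
      by (metis mult_zero_right order_less_irrefl)
    then obtain W Z where W: "\<forall>k<q * r. dot r (W k) (W k) = 1" and Z: "\<forall>y\<in>Y. dot r (Z y) (Z y) = 1"
      and WZ: "\<forall>k<q * r. \<forall>y\<in>Y. sgn (dot r (W k) (Z y)) = sgn (dot r (u (e k)) (v y))"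
      and iso: "\<forall>y\<in>Y. real q / 6 \<le> (\<Sum>k<q * r. (dot r (W k) (Z y))^2)"
      using isotropic_sign_representation[OF Y(1) r q, where u = "\<lambda>k. u (e k)"] by blast
    have "0 < H (e k) y * dot r (W k) (Z y)" if "k < q * r" "y \<in> Y" for k y
    proof -
      have "sgn (H (e k) y * dot r (W k) (Z y)) = sgn (H (e k) y * dot r (u (e k)) (v y))"
        using WZ that by (simp add: sgn_mult)
      then show ?thesis using sign_e that sgn_greater by metis
    qed
    then have "real q / 6 \<le> sqrt (real (q * r))"
      using isotropic_sign_pattern_bound[OF X(1) Y \<open>0 < N\<close> orth H x W Z _ iso] by blast
    then have "real q \<le> 36 * real r" using q by (rule le_36_mult_of_sqrt_bound)
    have "real N < real q * real r + real r"
      using N_less by (metis of_nat_add of_nat_less_iff of_nat_mult)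
    also have "\<dots> \<le> 36 * real r * real r + real r"
      using \<open>real q \<le> 36 * real r\<close> by (simp add: mult_right_mono)
    also have "\<dots> \<le> 37 * (real r)^2"
      using r by (simp add: power2_eq_square)
    finally show ?thesis by simp
  qed simp
qed

section \<open>The inner product function as a Hadamard matrix\<close>

definition parity_sign :: "nat set \<Rightarrow> nat set \<Rightarrow> real" where
  "parity_sign S T = (if odd (card (S \<inter> T)) then 1 else -1)"

lemma odd_card_toggle:
  assumes "finite S" and "z \<in> T"
  shows "odd (card ((S - {z} \<union> ({z} - S)) \<inter> T)) \<longleftrightarrow> \<not> odd (card (S \<inter> T))"
proof (cases "z \<in> S")
  case True
  then have "(S - {z} \<union> ({z} - S)) \<inter> T = (S \<inter> T) - {z}" and "z \<in> S \<inter> T"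
    using assms(2) by auto
  moreover obtain c where "card (S \<inter> T) = Suc c"
    using \<open>z \<in> S \<inter> T\<close> assms(1) by (metis card_0_eq empty_iff finite_Int not0_implies_Suc)
  ultimately show ?thesis using \<open>z \<in> S \<inter> T\<close> by (simp add: card_Diff_singleton)
next
  case False
  then have "(S - {z} \<union> ({z} - S)) \<inter> T = insert z (S \<inter> T)" using assms(2) by auto
  then show ?thesis using False assms(1) by simp
qed

lemma parity_sign_orthogonal:
  assumes T1: "T1 \<subseteq> {0..<n}" and T2: "T2 \<subseteq> {0..<n}"
  shows "(\<Sum>S\<in>Pow {0..<n}. parity_sign S T1 * parity_sign S T2) = (if T1 = T2 then real (2^n) else 0)"
proof (cases "T1 = T2")
  case True
  then have "(\<Sum>S\<in>Pow {0..<n}. parity_sign S T1 * parity_sign S T2) = (\<Sum>S\<in>Pow {0..<n}. 1)"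
    by (intro sum.cong) (auto simp: parity_sign_def)
  then show ?thesis using True by (simp add: card_Pow)
next
  case False
  then obtain z where z: "z \<in> T1 \<and> z \<notin> T2 \<or> z \<in> T2 \<and> z \<notin> T1" by blast
  define toggle where "toggle S = S - {z} \<union> ({z} - S)" for S :: "nat set"
  define h where "h S = parity_sign S T1 * parity_sign S T2" for S
  have "z < n" using z T1 T2 by auto
  then have "bij_betw toggle (Pow {0..<n}) (Pow {0..<n})"
    by (intro bij_betw_byWitness[of _ toggle]) (auto simp: toggle_def)
  then have "(\<Sum>S\<in>Pow {0..<n}. h S) = (\<Sum>S\<in>Pow {0..<n}. h (toggle S))"
    by (simp add: sum.reindex_bij_betw)
  also have "\<dots> = - (\<Sum>S\<in>Pow {0..<n}. h S)"
  proof -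
    have "h (toggle S) = - h S" if "S \<in> Pow {0..<n}" for S
    proof -
      have S: "finite S" using that finite_subset by auto
      have flip: "odd (card (toggle S \<inter> T)) \<longleftrightarrow> \<not> odd (card (S \<inter> T))" if "z \<in> T" for T
        using odd_card_toggle[OF S that] unfolding toggle_def .
      have keep: "toggle S \<inter> T = S \<inter> T" if "z \<notin> T" for T
        using that unfolding toggle_def by auto
      from z show ?thesis
      proof
        assume "z \<in> T1 \<and> z \<notin> T2"
        then show ?thesis using flip keep unfolding h_def parity_sign_def by simp
      next
        assume "z \<in> T2 \<and> z \<notin> T1"
        then show ?thesis using flip keep unfolding h_def parity_sign_def by simp
      qed
    qed
    then show ?thesis by (simp add: sum_negf)
  qed
  finally show ?thesis using False unfolding h_def by simp
qed

definition cube_point :: "nat \<Rightarrow> nat set \<Rightarrow> nat set \<Rightarrow> nat \<Rightarrow> real" where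
  "cube_point n S T i = (if i < n then of_bool (i \<in> S) else if i < 2 * n then of_bool (i - n \<in> T) else 0)"

lemma cube_point_in_bool_cube: "cube_point n S T \<in> bool_cube (2 * n)"
  unfolding bool_cube_def cube_point_def by auto

lemma IP_cube_point:
  assumes "S \<subseteq> {0..<n}" "T \<subseteq> {0..<n}"
  shows "IP n (cube_point n S T) \<longleftrightarrow> odd (card (S \<inter> T))"
proof -
  have "{i. i < n \<and> cube_point n S T i = 1 \<and> cube_point n S T (n + i) = 1} = S \<inter> T"
    using assms unfolding cube_point_def by auto
  then show ?thesis unfolding IP_def by simp
qed

definition sqdist :: "nat \<Rightarrow> (nat \<Rightarrow> real) \<Rightarrow> (nat \<Rightarrow> real) \<Rightarrow> real" where
  "sqdist m a p = (\<Sum>i<m. (a i - p i)^2)"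

lemma edist_eq_sqrt_sqdist: "edist m a p = sqrt (sqdist m a p)"
  unfolding edist_def sqdist_def ..

lemma sqdist_cube_point:
  "sqdist (2 * n) (cube_point n S T) p
     = (\<Sum>i<n. (of_bool (i \<in> S) - p i)^2) + (\<Sum>i<n. (of_bool (i \<in> T) - p (n + i))^2)"
proof -
  have "{..<2 * n} = {..<n} \<union> (\<lambda>i. n + i) ` {..<n}"
  proof
    show "{..<2 * n} \<subseteq> {..<n} \<union> (\<lambda>i. n + i) ` {..<n}"
    proof
      fix i assume "i \<in> {..<2 * n}"
      then show "i \<in> {..<n} \<union> (\<lambda>i. n + i) ` {..<n}"
        by (cases "i < n") (auto intro!: image_eqI[of _ _ "i - n"])
    qed
  qed auto
  moreover have "{..<n} \<inter> (\<lambda>i. n + i) ` {..<n} = {}" by auto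
  ultimately have "sqdist (2 * n) (cube_point n S T) p = (\<Sum>i<n. (cube_point n S T i - p i)^2)
      + (\<Sum>i\<in>(\<lambda>i. n + i) ` {..<n}. (cube_point n S T i - p i)^2)"
    unfolding sqdist_def by (simp add: sum.union_disjoint)
  also have "(\<Sum>i\<in>(\<lambda>i. n + i) ` {..<n}. (cube_point n S T i - p i)^2)
      = (\<Sum>i<n. (cube_point n S T (n + i) - p (n + i))^2)"
    by (simp add: sum.reindex)
  also have "(\<Sum>i<n. (cube_point n S T (n + i) - p (n + i))^2) = (\<Sum>i<n. (of_bool (i \<in> T) - p (n + i))^2)"
    by (intro sum.cong) (auto simp: cube_point_def)
  also have "(\<Sum>i<n. (cube_point n S T i - p i)^2) = (\<Sum>i<n. (of_bool (i \<in> S) - p i)^2)"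
    by (intro sum.cong) (auto simp: cube_point_def)
  finally show ?thesis .
qed

section \<open>Sign representations from nearest neighbour representations\<close>

lemma sum_less_of_pointwise_less:
  fixes f :: "'a \<Rightarrow> real"
  assumes "finite A" "finite B" "card A = card B" "A \<noteq> {}" and less: "\<forall>a\<in>A. \<forall>b\<in>B. f a < f b"
  shows "sum f A < sum f B"
proof -
  define M where "M = Max (f ` A)"
  have "M \<in> f ` A" unfolding M_def using assms(1,4) by simp
  then have M_less: "\<forall>b\<in>B. M < f b" using less by auto
  have "B \<noteq> {}" using assms(1-4) by auto
  have "sum f A \<le> (\<Sum>a\<in>A. M)" unfolding M_def using assms(1) by (intro sum_mono) simp
  also have "\<dots> = (\<Sum>b\<in>B. M)" using assms(3) by simp
  also have "\<dots> < sum f B" using M_less assms(2) \<open>B \<noteq> {}\<close> by (intro sum_strict_mono) auto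
  finally show ?thesis .
qed

lemma sum_less_of_nearest:
  fixes f :: "'a \<Rightarrow> real"
  assumes U: "finite U" and ST: "S \<subseteq> U" "T \<subseteq> U" "card S = card T" "S \<noteq> T"
    and near: "\<forall>s\<in>S. \<forall>t\<in>U - S. f s < f t"
  shows "sum f S < sum f T"
proof -
  have fin: "finite S" "finite T" using U ST finite_subset by auto
  have "card (S - T) = card (T - S)"
    using fin ST(3) by (simp add: card_Diff_subset_Int Int_commute)
  moreover have "S - T \<noteq> {}"
    using fin ST(3,4) by (metis Diff_eq_empty_iff card_subset_eq)
  ultimately have "sum f (S - T) < sum f (T - S)"
    using fin near ST(2) by (intro sum_less_of_pointwise_less) auto
  moreover have "sum f S = sum f (S \<inter> T) + sum f (S - T)"
    using fin(1) by (rule sum.Int_Diff)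
  moreover have "sum f T = sum f (S \<inter> T) + sum f (T - S)"
    using sum.Int_Diff[OF fin(2), of f S] by (simp add: Int_commute)
  ultimately show ?thesis by linarith
qed

lemma softmin_sign:
  fixes \<Phi> \<sigma> :: "'a \<Rightarrow> real"
  assumes K: "finite K" "S \<in> K" and gap: "\<forall>T\<in>K - {S}. g \<le> \<Phi> T - \<Phi> S" and g: "0 < g"
    and \<sigma>: "\<forall>T\<in>K. \<sigma> T = 1 \<or> \<sigma> T = -1"
  defines "\<beta> \<equiv> (ln (real (card K)) + 1) / g"
  shows "0 < \<sigma> S * (\<Sum>T\<in>K. \<sigma> T * exp (- \<beta> * \<Phi> T))"
proof -
  define r where "r = card K"
  have r: "0 < r" unfolding r_def using K card_gt_0_iff by blast
  define E where "E T = exp (- \<beta> * \<Phi> T)" for T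
  have decay: "E T \<le> exp (-1) / real r * E S" if "T \<in> K - {S}" for T
  proof -
    have "\<beta> * g = ln (real r) + 1" unfolding \<beta>_def r_def using g by simp
    moreover have "0 \<le> \<beta>" unfolding \<beta>_def using g r by (simp add: r_def)
    ultimately have "ln (real r) + 1 \<le> \<beta> * (\<Phi> T - \<Phi> S)"
      using gap that by (metis mult_left_mono)
    then have "E T \<le> exp (-1 - ln (real r) + - \<beta> * \<Phi> S)"
      unfolding E_def by (simp add: algebra_simps)
    also have "\<dots> = exp (-1) / real r * E S"
      unfolding E_def using r by (simp add: exp_add exp_diff exp_minus field_simps)
    finally show ?thesis .
  qed
  have "0 < E S * (1 - real (r - 1) * exp (-1) / real r)"
  proof -
    have "real (r - 1) * exp (-1) \<le> real (r - 1)" by (simp add: mult_left_le)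
    also have "\<dots> < real r" using r by simp
    finally have "real (r - 1) * exp (-1) / real r < 1" using r by simp
    then show ?thesis by (simp add: E_def)
  qed
  also have "E S * (1 - real (r - 1) * exp (-1) / real r) = E S - (\<Sum>T\<in>K - {S}. exp (-1) / real r * E S)"
    using K unfolding r_def by (simp add: algebra_simps)
  also have "\<dots> \<le> E S + (\<Sum>T\<in>K - {S}. \<sigma> S * \<sigma> T * E T)"
  proof -
    have "- (exp (-1) / real r * E S) \<le> \<sigma> S * \<sigma> T * E T" if "T \<in> K - {S}" for T
    proof -
      have "\<sigma> S = 1 \<or> \<sigma> S = -1" and "\<sigma> T = 1 \<or> \<sigma> T = -1" using \<sigma> K that by auto
      then have "- E T \<le> \<sigma> S * \<sigma> T * E T" by (auto simp: E_def)
      then show ?thesis using decay[OF that] by linarith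
    qed
    then have "(\<Sum>T\<in>K - {S}. - (exp (-1) / real r * E S)) \<le> (\<Sum>T\<in>K - {S}. \<sigma> S * \<sigma> T * E T)"
      by (intro sum_mono) blast
    then show ?thesis by (simp add: sum_negf)
  qed
  also have "\<dots> = \<sigma> S * (\<Sum>T\<in>K. \<sigma> T * E T)"
    using K \<sigma> by (auto simp: sum.remove sum_distrib_left algebra_simps)
  finally show ?thesis unfolding E_def .
qed

lemma knn_rep_nearest_set:
  assumes rep: "is_kNN_rep k m f P N" and a: "a \<in> bool_cube m"
  shows "\<exists>S\<in>{S. S \<subseteq> P \<union> N \<and> card S = k}.
           (\<forall>T\<in>{S. S \<subseteq> P \<union> N \<and> card S = k} - {S}. (\<Sum>p\<in>S. sqdist m a p) < (\<Sum>p\<in>T. sqdist m a p)) \<and>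
           (f a \<longleftrightarrow> real k / 2 \<le> real (card (S \<inter> P)))"
proof -
  obtain S where S: "S \<subseteq> P \<union> N" "card S = k" "f a \<longleftrightarrow> real k / 2 \<le> real (card (S \<inter> P))"
    and near: "\<forall>s\<in>S. \<forall>t\<in>(P \<union> N) - S. edist m a s < edist m a t"
    using rep a unfolding is_kNN_rep_def by blast
  have "finite (P \<union> N)" using rep unfolding is_kNN_rep_def by simp
  moreover have "\<forall>s\<in>S. \<forall>t\<in>(P \<union> N) - S. sqdist m a s < sqdist m a t"
    using near by (simp add: edist_eq_sqrt_sqdist)
  ultimately have "(\<Sum>p\<in>S. sqdist m a p) < (\<Sum>p\<in>T. sqdist m a p)"
    if "T \<in> {S. S \<subseteq> P \<union> N \<and> card S = k} - {S}" for T
    using S that by (intro sum_less_of_nearest[of "P \<union> N"]) auto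
  then show ?thesis using S by blast
qed

lemma finite_positive_lower_bound:
  fixes f :: "'a \<Rightarrow> real"
  assumes "finite A" and "\<forall>x\<in>A. 0 < f x"
  obtains g where "0 < g" and "\<forall>x\<in>A. g \<le> f x"
proof
  show "0 < Min (insert 1 (f ` A))" and "\<forall>x\<in>A. Min (insert 1 (f ` A)) \<le> f x"
    using assms by simp_all
qed

lemma bool_cube_finite: "finite (bool_cube m)"
proof (rule finite_subset)
  show "bool_cube m \<subseteq> (\<lambda>S i. of_bool (i \<in> S)) ` Pow {0..<m}"
  proof
    fix a assume a: "a \<in> bool_cube m"
    have "a = (\<lambda>i. of_bool (i \<in> {i. i < m \<and> a i = 1}))"
    proof
      fix i show "a i = of_bool (i \<in> {i. i < m \<and> a i = 1})"
        using a unfolding bool_cube_def by (cases "i < m") auto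
    qed
    then show "a \<in> (\<lambda>S i. of_bool (i \<in> S)) ` Pow {0..<m}"
      by (intro image_eqI[of _ _ "{i. i < m \<and> a i = 1}"]) auto
  qed
qed simp

lemma knn_rep_uniform_gap:
  assumes rep: "is_kNN_rep k m f P N"
  defines "K \<equiv> {S. S \<subseteq> P \<union> N \<and> card S = k}"
  obtains W \<gamma> where "0 < \<gamma>" and "\<forall>a\<in>bool_cube m. W a \<in> K \<and>
      (\<forall>T\<in>K - {W a}. \<gamma> \<le> (\<Sum>p\<in>T. sqdist m a p) - (\<Sum>p\<in>W a. sqdist m a p)) \<and>
      (f a \<longleftrightarrow> real k / 2 \<le> real (card (W a \<inter> P)))"
proof -
  define \<Phi> where "\<Phi> a T = (\<Sum>p\<in>T. sqdist m a p)" for a T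
  have "\<forall>a\<in>bool_cube m. \<exists>S. S \<in> K \<and> (\<forall>T\<in>K - {S}. \<Phi> a S < \<Phi> a T) \<and>
      (f a \<longleftrightarrow> real k / 2 \<le> real (card (S \<inter> P)))"
    using knn_rep_nearest_set[OF rep] unfolding K_def \<Phi>_def by blast
  from bchoice[OF this] obtain W where W: "\<forall>a\<in>bool_cube m. W a \<in> K \<and>
      (\<forall>T\<in>K - {W a}. \<Phi> a (W a) < \<Phi> a T) \<and> (f a \<longleftrightarrow> real k / 2 \<le> real (card (W a \<inter> P)))"
    by blast
  have "finite K" using rep unfolding is_kNN_rep_def K_def by simp
  then have "finite (Sigma (bool_cube m) (\<lambda>a. K - {W a}))" using bool_cube_finite by auto
  moreover have "\<forall>x\<in>Sigma (bool_cube m) (\<lambda>a. K - {W a}). 0 < (\<lambda>(a, T). \<Phi> a T - \<Phi> a (W a)) x"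
    using W by auto
  ultimately obtain \<gamma> where "0 < \<gamma>"
    and "\<forall>x\<in>Sigma (bool_cube m) (\<lambda>a. K - {W a}). \<gamma> \<le> (\<lambda>(a, T). \<Phi> a T - \<Phi> a (W a)) x"
    by (rule finite_positive_lower_bound)
  then have gap: "\<forall>a\<in>bool_cube m. \<forall>T\<in>K - {W a}. \<gamma> \<le> \<Phi> a T - \<Phi> a (W a)" by fastforce
  show ?thesis
    by (rule that[of \<gamma> W, OF \<open>0 < \<gamma>\<close>]) (use W gap in \<open>simp add: \<Phi>_def\<close>)
qed

definition half_weight :: "real \<Rightarrow> nat \<Rightarrow> nat \<Rightarrow> nat set \<Rightarrow> (nat \<Rightarrow> real) set \<Rightarrow> real" where
  "half_weight \<beta> n d S T = (\<Prod>p\<in>T. exp (- (\<beta> * (\<Sum>i<n. (of_bool (i \<in> S) - p (d + i))^2))))"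

lemma exp_sqdist_cube_point:
  assumes "finite T"
  shows "exp (- (\<beta> * (\<Sum>p\<in>T. sqdist (2 * n) (cube_point n S S') p)))
     = half_weight \<beta> n 0 S T * half_weight \<beta> n n S' T"
proof -
  have "exp (- (\<beta> * (\<Sum>p\<in>T. sqdist (2 * n) (cube_point n S S') p)))
      = (\<Prod>p\<in>T. exp (- (\<beta> * sqdist (2 * n) (cube_point n S S') p)))"
    using assms by (simp add: exp_sum sum_distrib_left sum_negf[symmetric])
  also have "\<dots> = (\<Prod>p\<in>T. exp (- (\<beta> * (\<Sum>i<n. (of_bool (i \<in> S) - p (0 + i))^2)))
                        * exp (- (\<beta> * (\<Sum>i<n. (of_bool (i \<in> S') - p (n + i))^2))))"
    by (intro prod.cong refl) (simp only: sqdist_cube_point add_0 distrib_left minus_add_distrib exp_add)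
  finally show ?thesis unfolding half_weight_def by (simp only: prod.distrib)
qed

lemma knn_rep_sign_representation:
  assumes rep: "is_kNN_rep k (2 * n) (IP n) P N"
  defines "r \<equiv> card (P \<union> N) choose k"
  shows "\<exists>u v. \<forall>S\<in>Pow {0..<n}. \<forall>T\<in>Pow {0..<n}. 0 < parity_sign S T * dot r (u S) (v T)"
proof -
  define K where "K = {S. S \<subseteq> P \<union> N \<and> card S = k}"
  have "finite (P \<union> N)" using rep unfolding is_kNN_rep_def by simp
  then have K: "finite K" "card K = r" unfolding K_def r_def by (simp_all add: n_subsets)
  then obtain g where g: "bij_betw g {0..<r} K" by (metis ex_bij_betw_nat_finite)
  obtain W \<gamma> where \<gamma>: "0 < \<gamma>" and W: "\<forall>a\<in>bool_cube (2 * n). W a \<in> K \<and>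
      (\<forall>T\<in>K - {W a}. \<gamma> \<le> (\<Sum>p\<in>T. sqdist (2 * n) a p) - (\<Sum>p\<in>W a. sqdist (2 * n) a p)) \<and>
      (IP n a \<longleftrightarrow> real k / 2 \<le> real (card (W a \<inter> P)))"
    by (rule knn_rep_uniform_gap[OF rep, folded K_def])
  define \<Phi> where "\<Phi> a T = (\<Sum>p\<in>T. sqdist (2 * n) a p)" for a T
  define \<sigma> where "\<sigma> T = (if real k / 2 \<le> real (card (T \<inter> P)) then 1 else -1 :: real)" for T
  define \<beta> where "\<beta> = (ln (real (card K)) + 1) / \<gamma>"
  define u where "u S j = half_weight \<beta> n 0 S (g j)" for S j
  define v where "v T j = \<sigma> (g j) * half_weight \<beta> n n T (g j)" for T j
  have "dot r (u S) (v T) = (\<Sum>j\<in>{0..<r}. \<sigma> (g j) * exp (- \<beta> * \<Phi> (cube_point n S T) (g j)))" for S T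
  proof -
    have "finite (g j)" if "j < r" for j
      using bij_betw_apply[OF g] that \<open>finite (P \<union> N)\<close> unfolding K_def by (auto intro: finite_subset)
    then show ?thesis
      unfolding dot_def u_def v_def \<Phi>_def by (intro sum.cong) (simp_all add: exp_sqdist_cube_point)
  qed
  then have dot_uv: "dot r (u S) (v T) = (\<Sum>T'\<in>K. \<sigma> T' * exp (- \<beta> * \<Phi> (cube_point n S T) T'))" for S T
    using sum.reindex_bij_betw[OF g] by simp
  have "0 < parity_sign S T * dot r (u S) (v T)" if "S \<in> Pow {0..<n}" "T \<in> Pow {0..<n}" for S T
  proof -
    define a where "a = cube_point n S T"
    have a: "a \<in> bool_cube (2 * n)" unfolding a_def by (rule cube_point_in_bool_cube)
    have "IP n a \<longleftrightarrow> odd (card (S \<inter> T))" using IP_cube_point that unfolding a_def by blast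
    moreover have "IP n a \<longleftrightarrow> real k / 2 \<le> real (card (W a \<inter> P))" using W a by blast
    ultimately have "parity_sign S T = \<sigma> (W a)" unfolding parity_sign_def \<sigma>_def by simp
    moreover have "\<forall>T\<in>K. \<sigma> T = 1 \<or> \<sigma> T = -1" unfolding \<sigma>_def by simp
    then have "0 < \<sigma> (W a) * dot r (u S) (v T)"
      using softmin_sign[OF K(1) _ _ \<gamma>, of "W a" "\<Phi> a" \<sigma>] W a
      unfolding dot_uv a_def[symmetric] \<beta>_def \<Phi>_def by auto
    ultimately show ?thesis by simp
  qed
  then show ?thesis by blast
qed

lemma knn_rep_size_bound:
  assumes "is_kNN_rep k (2 * n) (IP n) P N"
  shows "real (2^n) \<le> 37 * (real (card (P \<union> N) choose k))^2"
proof -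
  obtain u v where "\<forall>S\<in>Pow {0..<n}. \<forall>T\<in>Pow {0..<n}.
      0 < parity_sign S T * dot (card (P \<union> N) choose k) (u S) (v T)"
    using knn_rep_sign_representation[OF assms] by blast
  moreover have "\<forall>T\<in>Pow {0..<n}. \<forall>T'\<in>Pow {0..<n}. (\<Sum>S\<in>Pow {0..<n}. parity_sign S T * parity_sign S T')
      = (if T = T' then real (2^n) else 0)"
    using parity_sign_orthogonal by blast
  moreover have "\<forall>S\<in>Pow {0..<n}. \<forall>T\<in>Pow {0..<n}. parity_sign S T = 1 \<or> parity_sign S T = -1"
    unfolding parity_sign_def by simp
  ultimately show ?thesis by (intro sign_rank_lower_bound) (simp_all add: card_Pow)
qed

section \<open>Existence of nearest neighbour representations\<close>

text \<open>Every vertex of the cube gets k copies, all within distance \<open>1/4\<close> of it, so that its k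
  nearest points are its own copies.\<close>

definition shifted_copy :: "nat \<Rightarrow> (nat \<Rightarrow> real) \<Rightarrow> nat \<Rightarrow> nat \<Rightarrow> real" where
  "shifted_copy k a j = a(0 := a 0 + real j / (4 * real k))"

lemma shift_bounds:
  assumes "j < k"
  shows "0 \<le> real j / (4 * real k)" and "real j / (4 * real k) < 1 / 4"
  using assms by (simp_all add: divide_less_eq)

lemma shifted_copy_eq_iff:
  assumes m: "0 < m" and a: "a \<in> bool_cube m" "a' \<in> bool_cube m" and j: "j < k" "j' < k"
  shows "shifted_copy k a j = shifted_copy k a' j' \<longleftrightarrow> a = a' \<and> j = j'"
proof
  assume eq: "shifted_copy k a j = shifted_copy k a' j'"
  have other: "a i = a' i" if "i \<noteq> 0" for i
    using fun_cong[OF eq, of i] that unfolding shifted_copy_def by simp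
  have first: "a 0 + real j / (4 * real k) = a' 0 + real j' / (4 * real k)"
    using fun_cong[OF eq, of 0] unfolding shifted_copy_def by simp
  define c c' where "c = real j / (4 * real k)" and "c' = real j' / (4 * real k)"
  have "0 \<le> c" "c < 1 / 4" "0 \<le> c'" "c' < 1 / 4"
    unfolding c_def c'_def using shift_bounds[OF j(1)] shift_bounds[OF j(2)] by simp_all
  moreover have "a 0 \<in> {0, 1}" "a' 0 \<in> {0, 1}" using a m unfolding bool_cube_def by auto
  ultimately have "a 0 = a' 0"
    using first unfolding c_def[symmetric] c'_def[symmetric] by auto
  then have "real j / (4 * real k) = real j' / (4 * real k)" using first by simp
  then have "j = j'" using j by (simp add: divide_cancel_right)
  moreover have "a = a'" using other \<open>a 0 = a' 0\<close> by (metis ext)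
  ultimately show "a = a' \<and> j = j'" by simp
qed simp

lemma sqdist_shifted_copy_self:
  assumes "0 < m" and "j < k"
  shows "sqdist m b (shifted_copy k b j) < 1 / 16"
proof -
  have "sqdist m b (shifted_copy k b j) = (\<Sum>i<m. if i = 0 then (real j / (4 * real k))^2 else 0)"
    unfolding sqdist_def shifted_copy_def by (intro sum.cong) auto
  also have "\<dots> = (real j / (4 * real k))^2" using assms(1) by simp
  also have "\<dots> < (1 / 4)^2"
    using shift_bounds[OF assms(2)] by (intro power_strict_mono) auto
  finally show ?thesis by (simp add: power2_eq_square)
qed

lemma sqdist_shifted_copy_other:
  assumes b: "b \<in> bool_cube m" and a: "a \<in> bool_cube m" and "a \<noteq> b" and j: "j < k"
  shows "9 / 16 \<le> sqdist m b (shifted_copy k a j)"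
proof -
  obtain i where i: "a i \<noteq> b i" using \<open>a \<noteq> b\<close> by (metis ext)
  have "i < m"
  proof (rule ccontr)
    assume "\<not> i < m"
    then have "a i = 0" "b i = 0" using a b unfolding bool_cube_def by auto
    then show False using i by simp
  qed
  then have ab: "a i \<in> {0, 1}" "b i \<in> {0, 1}" using a b unfolding bool_cube_def by auto
  have "9 / 16 \<le> (b i - shifted_copy k a j i)^2"
  proof (cases "i = 0")
    case True
    define c where "c = real j / (4 * real k)"
    have "0 \<le> c" "c < 1 / 4" unfolding c_def using shift_bounds[OF j] by auto
    moreover have "b i - shifted_copy k a j i = 1 - c \<or> b i - shifted_copy k a j i = -1 - c"
      using ab i True unfolding shifted_copy_def c_def by auto
    ultimately have "3 / 4 \<le> \<bar>b i - shifted_copy k a j i\<bar>" by auto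
    then have "(3 / 4)^2 \<le> \<bar>b i - shifted_copy k a j i\<bar>^2" by (rule power_mono) simp
    then show ?thesis by (simp add: power_divide)
  next
    case False
    then show ?thesis using ab i unfolding shifted_copy_def by auto
  qed
  also have "\<dots> \<le> sqdist m b (shifted_copy k a j)"
    unfolding sqdist_def using \<open>i < m\<close> by (intro member_le_sum) auto
  finally show ?thesis .
qed

lemma edist_shifted_copy_less:
  assumes "0 < m" and "b \<in> bool_cube m" "a \<in> bool_cube m" "a \<noteq> b" and "j < k" "j' < k"
  shows "edist m b (shifted_copy k b j) < edist m b (shifted_copy k a j')"
  using sqdist_shifted_copy_self[OF assms(1,5), of b] sqdist_shifted_copy_other[OF assms(2-4,6)]
  by (simp add: edist_eq_sqrt_sqdist)

lemma knn_rep_exists: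
  assumes m: "0 < m" and k: "0 < k"
  shows "\<exists>P N. is_kNN_rep k m f P N"
proof -
  define copies where "copies F = (\<lambda>(a, j). shifted_copy k a j) ` (F \<times> {..<k})" for F
  define P where "P = copies {a \<in> bool_cube m. f a}"
  define N where "N = copies {a \<in> bool_cube m. \<not> f a}"
  have copies_iff: "p \<in> copies F \<longleftrightarrow> (\<exists>a\<in>F. \<exists>j<k. p = shifted_copy k a j)" for p F
    unfolding copies_def by auto
  have PN: "P \<union> N = copies (bool_cube m)" unfolding P_def N_def copies_def by auto
  have fin: "finite (P \<union> N)" unfolding PN copies_def using bool_cube_finite by simp
  have disj: "P \<inter> N = {}"
    unfolding P_def N_def using shifted_copy_eq_iff[OF m] by (fastforce simp: copies_iff)
  have eucl: "P \<union> N \<subseteq> euclid_space m"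
    unfolding PN euclid_space_def copies_def shifted_copy_def bool_cube_def using m by auto
  have nearest: "\<exists>S. S \<subseteq> P \<union> N \<and> card S = k \<and> (\<forall>s\<in>S. \<forall>t\<in>(P \<union> N) - S. edist m b s < edist m b t) \<and>
      (f b \<longleftrightarrow> real k / 2 \<le> real (card (S \<inter> P)))" if b: "b \<in> bool_cube m" for b
  proof -
    define S where "S = shifted_copy k b ` {..<k}"
    have "S \<subseteq> P \<union> N" unfolding S_def PN copies_def using b by auto
    moreover have "card S = k"
      unfolding S_def using shifted_copy_eq_iff[OF m b b] by (simp add: card_image inj_on_def)
    moreover have "edist m b s < edist m b t" if s: "s \<in> S" and t: "t \<in> (P \<union> N) - S" for s t
    proof -
      obtain j where "j < k" "s = shifted_copy k b j" using s unfolding S_def by auto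
      moreover obtain a j' where "a \<in> bool_cube m" "j' < k" "t = shifted_copy k a j'"
        using t unfolding PN copies_def by auto
      moreover have "a \<noteq> b" using t \<open>j' < k\<close> \<open>t = shifted_copy k a j'\<close> unfolding S_def by auto
      ultimately show ?thesis using edist_shifted_copy_less[OF m b] by simp
    qed
    moreover have "f b \<longleftrightarrow> real k / 2 \<le> real (card (S \<inter> P))"
    proof (cases "f b")
      case True
      then have "S \<inter> P = S" unfolding S_def P_def copies_def using b by auto
      then show ?thesis using True \<open>card S = k\<close> by simp
    next
      case False
      then have "S \<inter> P = {}"
        unfolding S_def P_def using shifted_copy_eq_iff[OF m _ b] by (fastforce simp: copies_iff)
      then show ?thesis using False k by simp
    qed
    ultimately show ?thesis by blast
  qed
  have "is_kNN_rep k m f P N"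
    unfolding is_kNN_rep_def using fin disj eucl nearest by auto
  then show ?thesis by blast
qed

lemma le_6_mult_of_pow2_le:
  fixes n s :: nat
  assumes "(2::nat) ^ n \<le> 37 * 4 ^ s" and "8 \<le> n"
  shows "n \<le> 6 * s"
proof (rule ccontr)
  assume "\<not> n \<le> 6 * s"
  then have "2 * s + 6 \<le> n" using assms(2) by linarith
  then have "(2::nat) ^ (2 * s + 6) \<le> 2 ^ n" by (rule power_increasing) simp
  moreover have "(2::nat) ^ (2 * s + 6) = 64 * 4 ^ s" by (simp add: power_add power_mult)
  moreover have "(0::nat) < 4 ^ s" by simp
  ultimately show False using assms(1) by linarith
qed

lemma kNN_IP_lower_bound:
  assumes "1 \<le> k" and "8 \<le> n"
  shows "n \<le> 6 * kNN k (2 * n) (IP n)"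
proof -
  define s where "s = kNN k (2 * n) (IP n)"
  \<comment> \<open>\<open>kNN\<close> is a \<open>LEAST\<close>, which says nothing unless some representation exists.\<close>
  have "\<exists>s P N. is_kNN_rep k (2 * n) (IP n) P N \<and> card (P \<union> N) = s"
    using knn_rep_exists assms by simp
  then have "\<exists>P N. is_kNN_rep k (2 * n) (IP n) P N \<and> card (P \<union> N) = s"
    unfolding s_def kNN_def by (rule LeastI_ex)
  then obtain P N where rep: "is_kNN_rep k (2 * n) (IP n) P N" and "card (P \<union> N) = s"
    by blast
  then have "real (2 ^ n) \<le> 37 * (real (s choose k))^2"
    using knn_rep_size_bound by blast
  also have "\<dots> \<le> 37 * (real (2 ^ s))^2"
    using binomial_le_pow2[of s k] by (intro mult_left_mono power_mono) simp_all
  also have "\<dots> = real (37 * 4 ^ s)"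
    by (simp add: power2_eq_square power_mult_distrib[symmetric])
  finally have "(2::nat) ^ n \<le> 37 * 4 ^ s" by (simp only: of_nat_le_iff)
  then show ?thesis unfolding s_def using assms(2) by (rule le_6_mult_of_pow2_le)
qed

theorem theorem11:
  fixes k :: nat
  assumes "k \<ge> 1"
  shows "\<exists>\<epsilon> :: nat \<Rightarrow> real. \<epsilon> \<longlonglongrightarrow> 0 \<and>
           (\<forall>\<^sub>F n in sequentially. real n / (6 + \<epsilon> n) \<le> real (kNN k (2 * n) (IP n)))"
proof -
  have "real n / 6 \<le> real (kNN k (2 * n) (IP n))" if "8 \<le> n" for n
    using kNN_IP_lower_bound[OF assms that] by linarith
  then have "\<forall>\<^sub>F n in sequentially. real n / (6 + 0) \<le> real (kNN k (2 * n) (IP n))"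
    unfolding eventually_sequentially by auto
  then show ?thesis by (intro exI[of _ "\<lambda>_. 0"]) simp
qed

end
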